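(* Let $\widetilde\nu=\mathcal{A}_k(\nu)$ for some $k\in\{1,2\}$ and some $\nu\in\mathfrak{M}_L^k(\mathbb{R}^d)$. Then $\widetilde\nu\in\mathfrak{M}_L(\mathbb{R}^d)$ and $\widetilde\nu$ has a polar decomposition $(\lambda,\ell_\xi(r)\mathrm{d}r)$ with the following properties: $\ell_\xi(r)$ is measurable in $(\xi,r)$ and lower semi-continuous in $r\in(0,\infty)$, and for each $\xi$ there is $b_\xi\in(0,\infty]$ such that $\ell_\xi(r)>0$ for $r<b_\xi$ and, if $b_\xi<\infty$, $\ell_\xi(r)=0$ for $r\ge b_\xi$.
   Context: A Lévy measure on $\mathbb{R}^d$ is a measure $\nu$ with $\nu(\{0\})=0$ and $\int(1\wedge|x|^2)\nu(\mathrm{d}x)<\infty$; their class is $\mathfrak{M}_L(\mathbb{R}^d)=\mathfrak{M}_L^2(\mathbb{R}^d)$, and $\mathfrak{M}_L^1(\mathbb{R}^d)$ is the class of Lévy measures with $\int(1\wedge|x|)\nu(\mathrm{d}x)<\infty$. For $s>0$ set $a_1(r;s)=2\pi^{-1}(s-r^2)^{-1/2}$ for $0<r<s^{1/2}$ and $0$ otherwise; $a_2(r;s)=2\pi^{-1}(s^2-r^2)^{-1/2}$ for $0<r<s$ and $0$ otherwise. $\mathcal{A}_k(\nu)(B)=\int_{\mathbb{R}^d\setminus\{0\}}\nu(\mathrm{d}x)\int_0^\infty a_k(r;|x|)1_B(rx/|x|)\,\mathrm{d}r$. A polar decomposition of $\nu\in\mathfrak{M}_L(\mathbb{R}^d)$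 is a pair $(\lambda,\{\nu_\xi\})$ where $\lambda$ is a measure on the unit sphere $\mathbb{S}=\{|\xi|=1\}$ and $\{\nu_\xi:\xi\in\mathbb{S}\}$ are measures on $(0,\infty)$ with $\nu_\xi(E)$ measurable in $\xi$ for each Borel $E$, $0<\nu_\xi((0,\infty))\le\infty$, and $\nu(B)=\int_{\mathbb{S}}\lambda(\mathrm{d}\xi)\int_0^\infty 1_B(r\xi)\nu_\xi(\mathrm{d}r)$ for all Borel $B$. *)

theory Defs
  imports "HOL-Analysis.Analysis"
begin

text \<open>Levy measures on a Euclidean space 'a (playing the role of R^d):
  nu({0}) = 0 and the integral of min 1 |x|^k is finite.
  levy_measure_k 2 is the class M_L = M_L^2, levy_measure_k 1 is M_L^1.\<close>
definition levy_measure_k :: "nat \<Rightarrow> 'a::euclidean_space measure \<Rightarrow> bool" where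
  "levy_measure_k k nu \<longleftrightarrow> sets nu = sets borel \<and> emeasure nu {0} = 0 \<and>
     (\<integral>\<^sup>+ x. ennreal (min 1 (norm x ^ k)) \<partial>nu) < \<infinity>"

abbreviation levy_measure :: "'a::euclidean_space measure \<Rightarrow> bool" where
  "levy_measure nu \<equiv> levy_measure_k 2 nu"

definition a1 :: "real \<Rightarrow> real \<Rightarrow> real" where
  "a1 r s = (if 0 < r \<and> r < sqrt s then 2 / pi * (1 / sqrt (s - r\<^sup>2)) else 0)"

definition a2 :: "real \<Rightarrow> real \<Rightarrow> real" where
  "a2 r s = (if 0 < r \<and> r < s then 2 / pi * (1 / sqrt (s\<^sup>2 - r\<^sup>2)) else 0)"

definition a_kernel :: "nat \<Rightarrow> real \<Rightarrow> real \<Rightarrow> real" where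
  "a_kernel k = (if k = 1 then a1 else a2)"

definition A_fun :: "nat \<Rightarrow> 'a::euclidean_space measure \<Rightarrow> 'a set \<Rightarrow> ennreal" where
  "A_fun k nu B = (\<integral>\<^sup>+ x. indicator (UNIV - {0}) x *
      (\<integral>\<^sup>+ r. indicator {0<..} r * ennreal (a_kernel k r (norm x)) *
               indicator B ((r / norm x) *\<^sub>R x) \<partial>lborel) \<partial>nu)"

definition A_op :: "nat \<Rightarrow> 'a::euclidean_space measure \<Rightarrow> 'a measure" where
  "A_op k nu = measure_of UNIV (sets borel) (A_fun k nu)"

abbreviation unit_sphere :: "'a::euclidean_space set" where
  "unit_sphere \<equiv> sphere 0 1"

definition polar_decomposition ::
  "'a::euclidean_space measure \<Rightarrow> 'a measure \<Rightarrow> ('a \<Rightarrow> real measure) \<Rightarrow> bool" where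
  "polar_decomposition nu lam nuxi \<longleftrightarrow>
     sets lam = sets (restrict_space borel unit_sphere) \<and>
     (\<forall>\<xi>\<in>unit_sphere. sets (nuxi \<xi>) = sets (restrict_space borel {0<..})) \<and>
     (\<forall>E\<in>sets (restrict_space borel {0<..}). (\<lambda>\<xi>. emeasure (nuxi \<xi>) E) \<in> borel_measurable lam) \<and>
     (\<forall>\<xi>\<in>unit_sphere. 0 < emeasure (nuxi \<xi>) {0<..}) \<and>
     (\<forall>B\<in>sets borel. emeasure nu B =
        (\<integral>\<^sup>+ \<xi>. (\<integral>\<^sup>+ r. indicator B (r *\<^sub>R \<xi>) \<partial>nuxi \<xi>) \<partial>lam))"

definition lsc_at_point :: "(real \<Rightarrow> ennreal) \<Rightarrow> real \<Rightarrow> bool" where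
  "lsc_at_point f r \<longleftrightarrow> (\<forall>c < f r. eventually (\<lambda>s. c < f s) (at r))"

end

theory Submission
  imports Defs "HOL-Probability.Probability"
begin

text \<open>
  Weighting \<open>\<nu>\<close> by \<open>min 1 (\<bar>x\<bar>^k)\<close> gives a finite measure; pushed to polar coordinates
  \<open>(x/\<bar>x\<bar>, \<bar>x\<bar>)\<close> it disintegrates as \<open>\<lambda>(d\<xi>) K\<^sub>\<xi>(ds)\<close>, the conditional distribution functions
  being Radon-Nikodym derivatives regularised along the dyadic numbers. Since \<open>a\<^sub>k(\<cdot>;s)\<close> is the
  arcsine density on \<open>(0, s^(k/2))\<close>, \<open>A\<^sub>k(\<nu>)\<close> then has the polar decomposition
  \<open>(\<lambda>, \<ell>\<^sub>\<xi>(r) dr)\<close> with \<open>\<ell>\<^sub>\<xi>(r) = \<integral> a\<^sub>k(r;s) / min 1 (s^k) K\<^sub>\<xi>(ds)\<close>. Fatou's lemma makes \<open>\<ell>\<^sub>\<xi>\<close> lower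
  semicontinuous, and \<open>\<ell>\<^sub>\<xi>(r) > 0\<close> iff \<open>K\<^sub>\<xi>{s. s^(k/2) > r} > 0\<close>, a condition that is downward closed
  and open in \<open>r\<close>, hence holds exactly below a threshold \<open>b\<^sub>\<xi>\<close>. The Levy property follows from
  \<open>\<integral> a\<^sub>k(r;s) min 1 (r\<^sup>2) dr \<le> min 1 (s^k)\<close>.
\<close>

section \<open>Distribution functions from their values at dyadic points\<close>

definition dyadics :: "real set" where
  "dyadics = (\<lambda>(i::int, j::nat). of_int i / 2^j) ` UNIV"

definition dyadic_above :: "nat \<Rightarrow> real \<Rightarrow> real" where
  "dyadic_above j t = (of_int \<lfloor>t * 2^j\<rfloor> + 1) / 2^j"

lemma countable_dyadics: "countable dyadics"
  unfolding dyadics_def by simp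

lemma dyadic_above_in_dyadics: "dyadic_above j t \<in> dyadics"
  unfolding dyadics_def dyadic_above_def
  by (auto intro!: image_eqI[where x="(\<lfloor>t * 2^j\<rfloor> + 1, j)"])

lemma of_int_in_dyadics: "of_int i \<in> dyadics"
  unfolding dyadics_def by (auto intro!: image_eqI[where x="(i, 0)"])

lemma less_dyadic_above: "t < dyadic_above j t"
proof -
  have "t * 2^j < of_int \<lfloor>t * 2^j\<rfloor> + 1" by linarith
  then show ?thesis unfolding dyadic_above_def by (simp add: field_simps)
qed

lemma dyadic_above_le: "dyadic_above j t \<le> t + 1 / 2^j"
proof -
  have "of_int \<lfloor>t * 2^j\<rfloor> + 1 \<le> t * 2^j + 1" by linarith
  then show ?thesis unfolding dyadic_above_def by (simp add: field_simps)
qed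

lemma dyadic_above_mono: "s \<le> t \<Longrightarrow> dyadic_above j s \<le> dyadic_above j t"
  unfolding dyadic_above_def
  by (intro divide_right_mono add_right_mono) (auto simp: floor_mono)

lemma dyadic_above_Suc_le: "dyadic_above (Suc j) t \<le> dyadic_above j t"
proof -
  have "t * 2 ^ Suc j = 2 * (t * 2 ^ j)" by simp
  then have "\<lfloor>t * 2 ^ Suc j\<rfloor> \<le> 2 * \<lfloor>t * 2 ^ j\<rfloor> + 1" by linarith
  then have "real_of_int \<lfloor>t * 2 ^ Suc j\<rfloor> \<le> real_of_int (2 * \<lfloor>t * 2 ^ j\<rfloor> + 1)"
    by (simp only: of_int_le_iff)
  then have "(of_int \<lfloor>t * 2 ^ Suc j\<rfloor> + 1) / 2 ^ Suc j
      \<le> (2 * (of_int \<lfloor>t * 2 ^ j\<rfloor> + 1)) / (2 ^ Suc j :: real)"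
    by (intro divide_right_mono) auto
  also have "\<dots> = (of_int \<lfloor>t * 2 ^ j\<rfloor> + 1) / 2 ^ j"
    by (simp only: power_Suc mult_divide_mult_cancel_left zero_neq_numeral not_False_eq_True)
  finally show ?thesis unfolding dyadic_above_def .
qed

lemma decseq_dyadic_above: "decseq (\<lambda>j. dyadic_above j t)"
  by (rule decseq_SucI) (rule dyadic_above_Suc_le)

lemma dyadic_above_eqI: "t \<le> s \<Longrightarrow> s < dyadic_above j t \<Longrightarrow> dyadic_above j s = dyadic_above j t"
proof -
  assume "t \<le> s" "s < dyadic_above j t"
  then have "t * 2^j \<le> s * 2^j" "s * 2^j < of_int \<lfloor>t * 2^j\<rfloor> + 1"
    by (simp_all add: dyadic_above_def field_simps)
  then have "\<lfloor>s * 2^j\<rfloor> = \<lfloor>t * 2^j\<rfloor>" by linarith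
  then show ?thesis unfolding dyadic_above_def by simp
qed

lemma dyadic_above_less: assumes "t < a" obtains j where "dyadic_above j t < a"
proof -
  obtain j where "(1/2::real)^j < a - t"
    using real_arch_pow_inv[of "a - t" "1/2"] assms by auto
  then have "dyadic_above j t < a"
    using dyadic_above_le[of j t] by (simp add: power_divide)
  then show ?thesis ..
qed

lemma INT_atMost_dyadic_above: "(\<Inter>j. {..dyadic_above j t}) = {..t}"
proof safe
  fix x assume x: "x \<in> (\<Inter>j. {..dyadic_above j t})"
  show "x \<le> t"
  proof (rule ccontr)
    assume "\<not> x \<le> t"
    then obtain j where "dyadic_above j t < x" by (meson dyadic_above_less not_le)
    with x show False by (auto simp: not_le[symmetric])
  qed
qed (use less_dyadic_above less_imp_le order_trans in blast)

definition dyadic_cdf :: "(real \<Rightarrow> ennreal) \<Rightarrow> bool" where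
  "dyadic_cdf f \<longleftrightarrow> (\<forall>a\<in>dyadics. \<forall>b\<in>dyadics. a \<le> b \<longrightarrow> f a \<le> f b) \<and> (\<forall>a\<in>dyadics. f a \<le> 1) \<and>
     (SUP n. f (real n)) = 1 \<and> (INF n. f (- real n)) = 0"

definition cdf_from_dyadics :: "(real \<Rightarrow> ennreal) \<Rightarrow> real \<Rightarrow> real" where
  "cdf_from_dyadics f t = enn2real (INF j. f (dyadic_above j t))"

lemma cdf_from_dyadics_nonneg [simp]: "0 \<le> cdf_from_dyadics f t"
  by (simp add: cdf_from_dyadics_def)

context
  fixes f :: "real \<Rightarrow> ennreal"
  assumes f: "dyadic_cdf f"
begin

private lemma mono_on_dyadics: "a \<in> dyadics \<Longrightarrow> b \<in> dyadics \<Longrightarrow> a \<le> b \<Longrightarrow> f a \<le> f b"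
  using f by (auto simp: dyadic_cdf_def)

lemma dyadic_cdf_INF_le:
  assumes "t < a" "a \<in> dyadics" shows "(INF j. f (dyadic_above j t)) \<le> f a"
proof -
  obtain j where "dyadic_above j t < a" using \<open>t < a\<close> by (rule dyadic_above_less)
  then have "f (dyadic_above j t) \<le> f a"
    using assms(2) dyadic_above_in_dyadics by (intro mono_on_dyadics) auto
  then show ?thesis by (rule INF_lower2[rotated]) simp
qed

lemma dyadic_cdf_le_INF: "a \<in> dyadics \<Longrightarrow> a \<le> t \<Longrightarrow> f a \<le> (INF j. f (dyadic_above j t))"
proof (intro INF_greatest mono_on_dyadics dyadic_above_in_dyadics)
  fix j assume "a \<le> t"
  then show "a \<le> dyadic_above j t" using less_dyadic_above[of t j] by linarith
qed

lemma INF_dyadic_above_le_1: "(INF j. f (dyadic_above j t)) \<le> 1"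
proof -
  have "t < of_int (\<lfloor>t\<rfloor> + 1)" by linarith
  then have "(INF j. f (dyadic_above j t)) \<le> f (of_int (\<lfloor>t\<rfloor> + 1))"
    by (rule dyadic_cdf_INF_le) (rule of_int_in_dyadics)
  also have "\<dots> \<le> 1" using f of_int_in_dyadics unfolding dyadic_cdf_def by blast
  finally show ?thesis .
qed

lemma ennreal_cdf_from_dyadics: "ennreal (cdf_from_dyadics f t) = (INF j. f (dyadic_above j t))"
  unfolding cdf_from_dyadics_def
  by (rule ennreal_enn2real) (rule le_less_trans[OF INF_dyadic_above_le_1 ennreal_one_less_top])

lemma cdf_from_dyadics_le_1: "cdf_from_dyadics f t \<le> 1"
  using INF_dyadic_above_le_1[of t] by (simp flip: ennreal_cdf_from_dyadics)

lemma mono_cdf_from_dyadics: "mono (cdf_from_dyadics f)"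
proof
  fix s t :: real assume "s \<le> t"
  then have "(INF j. f (dyadic_above j s)) \<le> (INF j. f (dyadic_above j t))"
    by (intro INF_mono) (metis dyadic_above_in_dyadics dyadic_above_mono mono_on_dyadics order_refl)
  then show "cdf_from_dyadics f s \<le> cdf_from_dyadics f t"
    by (simp flip: ennreal_cdf_from_dyadics)
qed

lemma cdf_from_dyadics_continuous_right: "continuous (at_right t) (cdf_from_dyadics f)"
proof (subst continuous_at_right_real_increasing)
  show "\<And>a b. a \<le> b \<Longrightarrow> cdf_from_dyadics f a \<le> cdf_from_dyadics f b"
    using mono_cdf_from_dyadics by (rule monoD)
  show "\<forall>\<epsilon>>0. \<exists>\<delta>>0. cdf_from_dyadics f (t + \<delta>) - cdf_from_dyadics f t < \<epsilon>"
  proof (intro allI impI)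
    fix \<epsilon> :: real assume "0 < \<epsilon>"
    then have "(INF j. f (dyadic_above j t)) < ennreal (cdf_from_dyadics f t + \<epsilon>)"
      unfolding ennreal_cdf_from_dyadics[symmetric] by (simp add: ennreal_less_iff)
    then obtain j where j: "f (dyadic_above j t) < ennreal (cdf_from_dyadics f t + \<epsilon>)"
      by (auto simp: INF_less_iff)
    \<comment> \<open>Any point in the same dyadic cell of level j has the same upper approximation.\<close>
    define \<delta> where "\<delta> = (dyadic_above j t - t) / 2"
    have \<delta>: "0 < \<delta>" using less_dyadic_above[of t j] by (simp add: \<delta>_def)
    have "dyadic_above j (t + \<delta>) = dyadic_above j t"
      using \<delta> less_dyadic_above[of t j] by (intro dyadic_above_eqI) (auto simp: \<delta>_def field_simps)
    then have "ennreal (cdf_from_dyadics f (t + \<delta>)) \<le> f (dyadic_above j t)"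
      unfolding ennreal_cdf_from_dyadics by (metis INF_lower UNIV_I)
    then have "ennreal (cdf_from_dyadics f (t + \<delta>)) < ennreal (cdf_from_dyadics f t + \<epsilon>)"
      using j by (rule le_less_trans)
    then have "cdf_from_dyadics f (t + \<delta>) < cdf_from_dyadics f t + \<epsilon>"
      using \<open>0 < \<epsilon>\<close> by (simp add: ennreal_less_iff del: ennreal_plus)
    with \<delta> show "\<exists>\<delta>>0. cdf_from_dyadics f (t + \<delta>) - cdf_from_dyadics f t < \<epsilon>"
      by (intro exI[of _ \<delta>]) auto
  qed
qed

lemma cdf_from_dyadics_at_top: "(cdf_from_dyadics f \<longlongrightarrow> 1) at_top"
proof (rule order_tendstoI)
  fix a :: real assume "1 < a"
  then show "eventually (\<lambda>t. cdf_from_dyadics f t < a) at_top"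
    by (intro always_eventually allI le_less_trans[OF cdf_from_dyadics_le_1])
next
  fix a :: real assume a: "a < 1"
  show "eventually (\<lambda>t. a < cdf_from_dyadics f t) at_top"
  proof (cases "a < 0")
    case True
    then show ?thesis by (simp add: cdf_from_dyadics_def less_le_trans[OF True])
  next
    case False
    then have "ennreal a < (SUP n. f (real n))" using f a by (auto simp: dyadic_cdf_def ennreal_less_one_iff)
    then obtain n where n: "ennreal a < f (real n)" by (auto simp: less_SUP_iff)
    have "a < cdf_from_dyadics f t" if "real n \<le> t" for t
      using order_less_le_trans[OF n dyadic_cdf_le_INF[OF _ that]] of_int_in_dyadics[of "int n"] False
      by (simp flip: ennreal_cdf_from_dyadics add: ennreal_less_iff)
    then show ?thesis by (auto simp: eventually_at_top_linorder)
  qed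
qed

lemma cdf_from_dyadics_at_bot: "(cdf_from_dyadics f \<longlongrightarrow> 0) at_bot"
proof (rule order_tendstoI)
  fix a :: real assume "a < 0"
  then show "eventually (\<lambda>t. a < cdf_from_dyadics f t) at_bot"
    using less_le_trans[OF \<open>a < 0\<close>] by simp
next
  fix a :: real assume a: "0 < a"
  have "(INF n. f (- real n)) < ennreal a" using f a by (auto simp: dyadic_cdf_def)
  then obtain n where n: "f (- real n) < ennreal a" by (auto simp: INF_less_iff)
  have "cdf_from_dyadics f t < a" if "t < - real n" for t
    using order_le_less_trans[OF dyadic_cdf_INF_le[OF that] n] of_int_in_dyadics[of "- int n"] a
    by (simp flip: ennreal_cdf_from_dyadics add: ennreal_less_iff)
  then show "eventually (\<lambda>t. cdf_from_dyadics f t < a) at_bot"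
    by (auto simp: eventually_at_bot_dense)
qed

lemma real_distribution_cdf_from_dyadics:
  "real_distribution (interval_measure (cdf_from_dyadics f))"
  using mono_cdf_from_dyadics cdf_from_dyadics_continuous_right
    cdf_from_dyadics_at_top cdf_from_dyadics_at_bot
  by (intro real_distribution_interval_measure) (auto dest: monoD)

lemma emeasure_cdf_from_dyadics_atMost:
  "emeasure (interval_measure (cdf_from_dyadics f)) {..t} = (INF j. f (dyadic_above j t))"
  using mono_cdf_from_dyadics cdf_from_dyadics_continuous_right cdf_from_dyadics_at_bot
  by (subst emeasure_interval_measure_Iic) (auto dest: monoD simp: ennreal_cdf_from_dyadics)

end

lemma kernel_of_dyadic_cdfs:
  fixes F :: "real \<Rightarrow> 'b \<Rightarrow> ennreal"
  assumes [measurable]: "\<And>t. F t \<in> borel_measurable X"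
  obtains K where "K \<in> X \<rightarrow>\<^sub>M prob_algebra borel"
    and "\<And>x t. x \<in> space X \<Longrightarrow> dyadic_cdf (\<lambda>t. F t x) \<Longrightarrow>
      emeasure (K x) {..t} = (INF j. F (dyadic_above j t) x)"
proof -
  define G where "G = {x \<in> space X. dyadic_cdf (\<lambda>t. F t x)}"
  have [measurable]: "G \<in> sets X"
    unfolding G_def dyadic_cdf_def by (measurable; simp add: countable_dyadics)
  define K where "K x = (if x \<in> G then interval_measure (cdf_from_dyadics (\<lambda>t. F t x))
    else return borel 0)" for x
  have K_atMost: "emeasure (K x) {..t} = (INF j. F (dyadic_above j t) x)" if "x \<in> G" for x t
    using that emeasure_cdf_from_dyadics_atMost by (simp add: K_def G_def)
  have "K \<in> X \<rightarrow>\<^sub>M prob_algebra borel"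
  proof (rule measurable_prob_algebra_generated[where \<Omega>=UNIV and G="range atMost"])
    show "sets (borel :: real measure) = sigma_sets UNIV (range atMost)"
      by (subst borel_eq_atMost) (simp add: sets_measure_of)
    show "Int_stable (range (atMost :: real \<Rightarrow> real set))"
      by (auto simp: Int_stable_def intro!: image_eqI[where x="min _ _"])
    show "prob_space (K x)" for x
      using real_distribution_cdf_from_dyadics
      by (auto simp: K_def real_distribution_def prob_space_return G_def)
    fix A :: "real set" assume "A \<in> range atMost"
    then obtain t where A: "A = {..t}" by auto
    have "(\<lambda>x. if x \<in> G then INF j. F (dyadic_above j t) x else emeasure (return borel (0::real)) {..t})
        \<in> borel_measurable X"
      by measurable
    then show "(\<lambda>x. emeasure (K x) A) \<in> borel_measurable X"
      by (rule measurable_cong[THEN iffD1, rotated]) (auto simp: A K_atMost; simp add: K_def)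
  qed (auto simp: K_def)
  then show ?thesis using K_atMost by (rule that) (simp add: G_def)
qed

section \<open>Disintegration of finite measures on a product with the real line\<close>

lemma AE_le_of_set_nn_integral_le:
  fixes f g :: "'a \<Rightarrow> ennreal"
  assumes [measurable]: "f \<in> borel_measurable M" "g \<in> borel_measurable M"
    and fin: "integral\<^sup>N M g \<noteq> \<infinity>"
    and le: "\<And>A. A \<in> sets M \<Longrightarrow> (\<integral>\<^sup>+x. f x * indicator A x \<partial>M) \<le> (\<integral>\<^sup>+x. g x * indicator A x \<partial>M)"
  shows "AE x in M. f x \<le> g x"
proof -
  let ?P = "\<lambda>f A. \<integral>\<^sup>+ x. f x * indicator A x \<partial>M"
  let ?N = "{x\<in>space M. g x < f x}"
  have N: "?N \<in> sets M" by measurable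
  have "?P g ?N \<le> integral\<^sup>N M g" by (intro nn_integral_mono) (auto split: split_indicator)
  then have Pg_fin: "?P g ?N \<noteq> \<infinity>" using fin by (auto simp: top_unique)
  have "?P (\<lambda>x. (f x - g x)) ?N = (\<integral>\<^sup>+x. f x * indicator ?N x - g x * indicator ?N x \<partial>M)"
    by (auto intro!: nn_integral_cong simp: indicator_def)
  also have "\<dots> = ?P f ?N - ?P g ?N"
    using N Pg_fin by (intro nn_integral_diff) (auto split: split_indicator)
  also have "\<dots> = 0"
    using le[OF N] Pg_fin by (intro diff_eq_0_ennreal) (auto simp: top_unique less_top)
  finally have "AE x in M. (f x - g x) * indicator ?N x = 0"
    by (subst (asm) nn_integral_0_iff_AE) auto
  with AE_space show ?thesis
    by eventually_elim (auto simp: indicator_def not_less diff_eq_0_iff_ennreal split: if_splits)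
qed

lemma measure_eq_on_atMost_rectangles:
  fixes M N :: "('b \<times> real) measure"
  assumes sets_M: "sets M = sets (X \<Otimes>\<^sub>M borel)" and sets_N: "sets N = sets (X \<Otimes>\<^sub>M borel)"
    and "finite_measure M"
    and eq: "\<And>A t. A \<in> sets X \<Longrightarrow> emeasure M (A \<times> {..t}) = emeasure N (A \<times> {..t})"
  shows "M = N"
proof -
  define E where "E = {A \<times> B | A B. A \<in> sets X \<and> B \<in> range (atMost :: real \<Rightarrow> real set)}"
  have sets_prod: "sets (X \<Otimes>\<^sub>M borel) = sigma_sets (space X \<times> UNIV) E"
  proof -
    have "sets (borel :: real measure) = sigma_sets UNIV (range atMost)"
      by (subst borel_eq_atMost) (simp add: sets_measure_of)
    then have "sets (X \<Otimes>\<^sub>M borel) = sets (sigma (space X \<times> space (borel :: real measure)) E)"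
      unfolding E_def
      by (intro sets_pair_eq[where Ca="{space X}" and Cb="range (\<lambda>n::nat. {..real n})"])
         (auto simp: sets.space_closed sets.sigma_sets_eq intro: real_arch_simple)
    also have "\<dots> = sigma_sets (space X \<times> UNIV) E"
      unfolding E_def using sets.space_closed[of X] by (subst sets_measure_of) auto
    finally show ?thesis .
  qed
  show ?thesis
  proof (rule measure_eqI_generator_eq[where A="\<lambda>n. space X \<times> {..real n}"])
    show "Int_stable E"
      unfolding Int_stable_def E_def
    proof safe
      fix A B and s t :: real assume "A \<in> sets X" "B \<in> sets X"
      moreover have "A \<times> {..s} \<inter> B \<times> {..t} = (A \<inter> B) \<times> {..min s t}" by auto
      ultimately show "\<exists>C D. A \<times> {..s} \<inter> B \<times> {..t} = C \<times> D \<and> C \<in> sets X \<and> D \<in> range atMost"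
        by blast
    qed
    show "E \<subseteq> Pow (space X \<times> UNIV)" unfolding E_def using sets.sets_into_space by blast
    show "sets M = sigma_sets (space X \<times> UNIV) E" "sets N = sigma_sets (space X \<times> UNIV) E"
      using sets_M sets_N sets_prod by simp_all
    show "range (\<lambda>n. space X \<times> {..real n}) \<subseteq> E" unfolding E_def by auto
    show "(\<Union>n. space X \<times> {..real n}) = space X \<times> UNIV" by (auto intro: real_arch_simple)
    show "emeasure M (space X \<times> {..real n}) \<noteq> \<infinity>" for n
      using \<open>finite_measure M\<close> by (simp add: finite_measure.emeasure_finite)
    show "Y \<in> E \<Longrightarrow> emeasure M Y = emeasure N Y" for Y unfolding E_def using eq by blast
  qed
qed

context
  fixes \<mu> :: "('b \<times> real) measure" and X :: "'b measure"
  assumes sets_\<mu>: "sets \<mu> = sets (X \<Otimes>\<^sub>M borel)" and "finite_measure \<mu>"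
begin

interpretation \<mu>: finite_measure \<mu> by fact

private lemma measurable_fst_marginal [measurable]: "fst \<in> \<mu> \<rightarrow>\<^sub>M X"
  using measurable_fst[of X borel] by (simp add: measurable_cong_sets[OF sets_\<mu> refl])

private lemma space_\<mu>: "space \<mu> = space X \<times> UNIV"
  using sets_eq_imp_space_eq[OF sets_\<mu>] by (simp add: space_pair_measure)

private lemma rectangle_in_sets [measurable]: "A \<in> sets X \<Longrightarrow> B \<in> sets borel \<Longrightarrow> A \<times> B \<in> sets \<mu>"
  by (simp add: sets_\<mu>)

private lemma finite_measure_marginal: "finite_measure (distr \<mu> X fst)"
  by (rule \<mu>.finite_measure_distr) simp

private lemma emeasure_marginal: "A \<in> sets X \<Longrightarrow> emeasure (distr \<mu> X fst) A = emeasure \<mu> (A \<times> UNIV)"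
  using sets.sets_into_space[of A X]
  by (subst emeasure_distr) (auto simp: space_\<mu> intro!: arg_cong[where f="emeasure \<mu>"])

lemma exists_conditional_cdf:
  obtains F where "\<And>t. F t \<in> borel_measurable X"
    and "\<And>A t. A \<in> sets X \<Longrightarrow>
      (\<integral>\<^sup>+x. F t x * indicator A x \<partial>distr \<mu> X fst) = emeasure \<mu> (A \<times> {..t})"
proof -
  define lam where "lam = distr \<mu> X fst"
  interpret lam: finite_measure lam
    unfolding lam_def by (rule finite_measure_marginal)
  define N where "N t = distr (density \<mu> (indicator (space X \<times> {..t}))) X fst" for t
  have sets_N: "sets (N t) = sets X" for t by (simp add: N_def)
  have emeasure_N: "emeasure (N t) A = emeasure \<mu> (A \<times> {..t})" if A: "A \<in> sets X" for A t
  proof -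
    have "emeasure (N t) A = emeasure (density \<mu> (indicator (space X \<times> {..t}))) (fst -` A \<inter> space \<mu>)"
      unfolding N_def using A by (subst emeasure_distr) auto
    also have "\<dots> = (\<integral>\<^sup>+x. indicator (space X \<times> {..t}) x * indicator (fst -` A \<inter> space \<mu>) x \<partial>\<mu>)"
      using A by (subst emeasure_density) auto
    also have "\<dots> = (\<integral>\<^sup>+x. indicator (A \<times> {..t}) x \<partial>\<mu>)"
      using sets.sets_into_space[OF A]
      by (intro nn_integral_cong) (auto simp: space_\<mu> split: split_indicator)
    finally show ?thesis using A by simp
  qed
  have "absolutely_continuous lam (N t)" for t
    unfolding absolutely_continuous_def
  proof
    fix A assume "A \<in> null_sets lam"
    then have A: "A \<in> sets X" "emeasure \<mu> (A \<times> UNIV) = 0"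
      by (auto simp: lam_def emeasure_marginal null_sets_def)
    moreover have "emeasure \<mu> (A \<times> {..t}) \<le> emeasure \<mu> (A \<times> UNIV)"
      using A by (intro emeasure_mono) auto
    ultimately have "emeasure \<mu> (A \<times> {..t}) = 0" by simp
    then show "A \<in> null_sets (N t)" using A by (simp add: null_sets_def emeasure_N sets_N)
  qed
  then have "density lam (RN_deriv lam (N t)) = N t" for t
    by (intro lam.density_RN_deriv) (simp_all add: lam_def sets_N)
  moreover have "emeasure (density lam (RN_deriv lam (N t))) A
      = (\<integral>\<^sup>+x. RN_deriv lam (N t) x * indicator A x \<partial>lam)" if "A \<in> sets X" for A t
    using that by (intro emeasure_density) (auto simp: lam_def)
  ultimately have integral_RN: "(\<integral>\<^sup>+x. RN_deriv lam (N t) x * indicator A x \<partial>lam)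
      = emeasure \<mu> (A \<times> {..t})" if "A \<in> sets X" for A t
    using that by (simp add: emeasure_N)
  have "RN_deriv lam (N t) \<in> borel_measurable X" for t
    using borel_measurable_RN_deriv[of lam "N t"] by (simp add: lam_def)
  then show ?thesis using integral_RN unfolding lam_def by (rule that)
qed

context
  fixes F :: "real \<Rightarrow> 'b \<Rightarrow> ennreal"
  assumes F_meas [measurable]: "\<And>t. F t \<in> borel_measurable X"
    and F: "\<And>A t. A \<in> sets X \<Longrightarrow>
      (\<integral>\<^sup>+x. F t x * indicator A x \<partial>distr \<mu> X fst) = emeasure \<mu> (A \<times> {..t})"
begin

private lemma nn_integral_conditional_cdf: "integral\<^sup>N (distr \<mu> X fst) (F t) = emeasure \<mu> (space X \<times> {..t})"
  by (subst F[symmetric]) (auto intro!: nn_integral_cong)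

private lemma set_nn_integral_1_marginal:
  "A \<in> sets X \<Longrightarrow> (\<integral>\<^sup>+x. 1 * indicator A x \<partial>distr \<mu> X fst) = emeasure \<mu> (A \<times> UNIV)"
  by (simp add: emeasure_marginal)

lemma AE_conditional_cdf_mono: "a \<le> b \<Longrightarrow> AE x in distr \<mu> X fst. F a x \<le> F b x"
  by (intro AE_le_of_set_nn_integral_le)
     (auto simp: F nn_integral_conditional_cdf \<mu>.emeasure_finite intro!: emeasure_mono)

lemma AE_conditional_cdf_le_1: "AE x in distr \<mu> X fst. F a x \<le> 1"
proof (rule AE_le_of_set_nn_integral_le)
  show "integral\<^sup>N (distr \<mu> X fst) (\<lambda>x. 1) \<noteq> \<infinity>"
    using finite_measure.emeasure_finite[OF finite_measure_marginal] by simp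
  fix A assume "A \<in> sets (distr \<mu> X fst)"
  then show "(\<integral>\<^sup>+x. F a x * indicator A x \<partial>distr \<mu> X fst) \<le> (\<integral>\<^sup>+x. 1 * indicator A x \<partial>distr \<mu> X fst)"
    by (simp only: sets_distr F set_nn_integral_1_marginal) (intro emeasure_mono; auto)
qed auto

lemma AE_conditional_cdf_SUP: "AE x in distr \<mu> X fst. (SUP n. F (real n) x) = 1"
proof -
  let ?lam = "distr \<mu> X fst"
  have "AE x in ?lam. \<forall>n. F (real n) x \<le> 1"
    using AE_conditional_cdf_le_1 by (simp add: AE_all_countable)
  then have SUP_le: "AE x in ?lam. (SUP n. F (real n) x) \<le> 1"
    by eventually_elim (rule SUP_least, simp)
  have "AE x in ?lam. 1 \<le> (SUP n. F (real n) x)"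
  proof (rule AE_le_of_set_nn_integral_le)
    show "integral\<^sup>N ?lam (\<lambda>x. SUP n. F (real n) x) \<noteq> \<infinity>"
      using nn_integral_mono_AE[OF SUP_le] finite_measure.emeasure_finite[OF finite_measure_marginal]
      by (auto simp: top_unique)
    fix A assume "A \<in> sets ?lam"
    then have A: "A \<in> sets X" by simp
    have "(\<Union>n. A \<times> {..real n}) = A \<times> UNIV" by (auto intro: real_arch_simple)
    then have "emeasure \<mu> (A \<times> UNIV) = (SUP n. emeasure \<mu> (A \<times> {..real n}))"
      using A by (subst SUP_emeasure_incseq) (auto simp: incseq_def)
    also have "\<dots> \<le> (\<integral>\<^sup>+x. (SUP n. F (real n) x) * indicator A x \<partial>?lam)"
      unfolding F[OF A, symmetric]
      by (intro SUP_least nn_integral_mono mult_right_mono SUP_upper) auto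
    finally show "(\<integral>\<^sup>+x. 1 * indicator A x \<partial>?lam) \<le> (\<integral>\<^sup>+x. (SUP n. F (real n) x) * indicator A x \<partial>?lam)"
      unfolding set_nn_integral_1_marginal[OF A] .
  qed auto
  with SUP_le show ?thesis by eventually_elim (rule antisym)
qed

lemma AE_conditional_cdf_INF: "AE x in distr \<mu> X fst. (INF n. F (- real n) x) = 0"
proof -
  let ?lam = "distr \<mu> X fst"
  have "(\<Inter>n. space X \<times> {..- real n}) = {}"
  proof safe
    fix a b assume "(a, b) \<in> (\<Inter>n. space X \<times> {..- real n})"
    moreover obtain n where "- b < real n" using reals_Archimedean2 by blast
    ultimately show "(a, b) \<in> {}" by (auto dest!: spec[of _ n])
  qed
  then have "(INF n. emeasure \<mu> (space X \<times> {..- real n})) = 0"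
    by (subst INF_emeasure_decseq) (auto simp: decseq_def)
  moreover have "integral\<^sup>N ?lam (\<lambda>x. INF n. F (- real n) x) \<le> (INF n. emeasure \<mu> (space X \<times> {..- real n}))"
  proof (rule INF_greatest)
    fix n
    have "integral\<^sup>N ?lam (\<lambda>x. INF n. F (- real n) x) \<le> integral\<^sup>N ?lam (F (- real n))"
      by (intro nn_integral_mono INF_lower) simp
    then show "integral\<^sup>N ?lam (\<lambda>x. INF n. F (- real n) x) \<le> emeasure \<mu> (space X \<times> {..- real n})"
      by (simp only: nn_integral_conditional_cdf)
  qed
  ultimately have "integral\<^sup>N ?lam (\<lambda>x. INF n. F (- real n) x) = 0" by simp
  then show ?thesis by (subst (asm) nn_integral_0_iff_AE) auto
qed

lemma AE_dyadic_cdf_conditional_cdf: "AE x in distr \<mu> X fst. dyadic_cdf (\<lambda>t. F t x)"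
proof -
  have "AE x in distr \<mu> X fst. \<forall>a\<in>dyadics. \<forall>b\<in>dyadics. a \<le> b \<longrightarrow> F a x \<le> F b x"
    using AE_conditional_cdf_mono by (auto simp: AE_ball_countable countable_dyadics)
  moreover have "AE x in distr \<mu> X fst. \<forall>a\<in>dyadics. F a x \<le> 1"
    using AE_conditional_cdf_le_1 by (simp add: AE_ball_countable countable_dyadics)
  ultimately show ?thesis
    using AE_conditional_cdf_SUP AE_conditional_cdf_INF
    by eventually_elim (simp add: dyadic_cdf_def)
qed

lemma emeasure_bind_atMost_rectangle:
  assumes K: "K \<in> X \<rightarrow>\<^sub>M prob_algebra borel"
    and AE_K: "AE x in distr \<mu> X fst. dyadic_cdf (\<lambda>t. F t x) \<and>
      (\<forall>t. emeasure (K x) {..t} = (INF j. F (dyadic_above j t) x))"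
    and A [measurable]: "A \<in> sets X" and "space X \<noteq> {}"
  shows "emeasure (distr \<mu> X fst \<bind> (\<lambda>x. distr (K x) (X \<Otimes>\<^sub>M borel) (Pair x))) (A \<times> {..t})
    = emeasure \<mu> (A \<times> {..t})"
proof -
  let ?lam = "distr \<mu> X fst"
  have sets_K: "sets (K x) = sets borel" if "x \<in> space X" for x
    using measurable_space[OF K that] by (simp add: space_prob_algebra)
  have "(\<lambda>x. distr (K x) (X \<Otimes>\<^sub>M borel) (Pair x)) \<in> ?lam \<rightarrow>\<^sub>M subprob_algebra (X \<Otimes>\<^sub>M borel)"
    unfolding measurable_cong_sets[OF sets_distr refl]
    by (rule measurable_distr2[where f="\<lambda>x y. (x, y)"]) (auto intro: measurable_prob_algebraD[OF K])
  then have "emeasure (?lam \<bind> (\<lambda>x. distr (K x) (X \<Otimes>\<^sub>M borel) (Pair x))) (A \<times> {..t})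
      = (\<integral>\<^sup>+x. emeasure (distr (K x) (X \<Otimes>\<^sub>M borel) (Pair x)) (A \<times> {..t}) \<partial>?lam)"
    using \<open>space X \<noteq> {}\<close> by (intro emeasure_bind) auto
  also have "\<dots> = (\<integral>\<^sup>+x. (INF j. F (dyadic_above j t) x * indicator A x) \<partial>?lam)"
  proof (rule nn_integral_cong_AE)
    show "AE x in ?lam. emeasure (distr (K x) (X \<Otimes>\<^sub>M borel) (Pair x)) (A \<times> {..t})
        = (INF j. F (dyadic_above j t) x * indicator A x)"
      using AE_K AE_space
    proof eventually_elim
      case (elim x)
      then have "emeasure (distr (K x) (X \<Otimes>\<^sub>M borel) (Pair x)) (A \<times> {..t}) = emeasure (K x) {..t} * indicator A x"
        by (subst emeasure_distr)
           (auto simp: measurable_cong_sets[OF sets_K refl] sets_eq_imp_space_eq[OF sets_K]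
             split: split_indicator)
      then show ?case using elim by (simp split: split_indicator)
    qed
  qed
  also have "\<dots> = (INF j. \<integral>\<^sup>+x. F (dyadic_above j t) x * indicator A x \<partial>?lam)"
  proof (rule nn_integral_monotone_convergence_INF_AE')
    show "AE x in ?lam. F (dyadic_above (Suc j) t) x * indicator A x
        \<le> F (dyadic_above j t) x * indicator A x" for j
      using AE_K
      by eventually_elim
         (auto intro!: mult_right_mono simp: dyadic_cdf_def dyadic_above_in_dyadics dyadic_above_Suc_le)
    show "(\<integral>\<^sup>+ x. F (dyadic_above 0 t) x * indicator A x \<partial>?lam) < \<infinity>"
      by (simp add: F \<mu>.emeasure_finite less_top[symmetric])
  qed simp
  also have "\<dots> = (INF j. emeasure \<mu> (A \<times> {..dyadic_above j t}))"
    by (simp add: F)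
  also have "\<dots> = emeasure \<mu> (\<Inter>j. A \<times> {..dyadic_above j t})"
    using decseq_dyadic_above[of t]
    by (intro INF_emeasure_decseq) (auto simp: decseq_def intro: order_trans)
  also have "(\<Inter>j. A \<times> {..dyadic_above j t}) = A \<times> {..t}"
    using INT_atMost_dyadic_above[of t] by auto
  finally show ?thesis .
qed

end

theorem finite_measure_disintegration:
  obtains K where "K \<in> X \<rightarrow>\<^sub>M prob_algebra borel"
    and "\<mu> = distr \<mu> X fst \<bind> (\<lambda>x. distr (K x) (X \<Otimes>\<^sub>M borel) (Pair x))"
proof -
  obtain F where F_meas: "\<And>t. F t \<in> borel_measurable X"
    and F: "\<And>A t. A \<in> sets X \<Longrightarrow>
      (\<integral>\<^sup>+x. F t x * indicator A x \<partial>distr \<mu> X fst) = emeasure \<mu> (A \<times> {..t})"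
    using exists_conditional_cdf by blast
  obtain K where K: "K \<in> X \<rightarrow>\<^sub>M prob_algebra borel"
    and K_atMost: "\<And>x t. x \<in> space X \<Longrightarrow> dyadic_cdf (\<lambda>t. F t x) \<Longrightarrow>
      emeasure (K x) {..t} = (INF j. F (dyadic_above j t) x)"
    using kernel_of_dyadic_cdfs[of F X, OF F_meas] by blast
  have "AE x in distr \<mu> X fst. dyadic_cdf (\<lambda>t. F t x)"
    using F_meas F by (rule AE_dyadic_cdf_conditional_cdf)
  then have AE_K: "AE x in distr \<mu> X fst. dyadic_cdf (\<lambda>t. F t x) \<and>
      (\<forall>t. emeasure (K x) {..t} = (INF j. F (dyadic_above j t) x))"
    using AE_space by eventually_elim (simp add: K_atMost)
  have "\<mu> = distr \<mu> X fst \<bind> (\<lambda>x. distr (K x) (X \<Otimes>\<^sub>M borel) (Pair x))"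
  proof (cases "space X = {}")
    case True
    then show ?thesis by (simp add: space_\<mu> space_empty bind_empty)
  next
    case False
    show ?thesis
    proof (rule measure_eq_on_atMost_rectangles[OF sets_\<mu> _ \<open>finite_measure \<mu>\<close>])
      show "sets (distr \<mu> X fst \<bind> (\<lambda>x. distr (K x) (X \<Otimes>\<^sub>M borel) (Pair x))) = sets (X \<Otimes>\<^sub>M borel)"
        using False by (subst sets_bind[where N="X \<Otimes>\<^sub>M borel"]) auto
    qed (use emeasure_bind_atMost_rectangle[of F, OF F_meas F K AE_K _ False] in simp)
  qed
  with K show ?thesis by (rule that)
qed
end

lemma nn_integral_bind_distr_Pair:
  assumes K: "K \<in> X \<rightarrow>\<^sub>M prob_algebra N" and sets_lam: "sets lam = sets X"
    and G [measurable]: "G \<in> borel_measurable (X \<Otimes>\<^sub>M N)"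
  shows "(\<integral>\<^sup>+ p. G p \<partial>lam \<bind> (\<lambda>x. distr (K x) (X \<Otimes>\<^sub>M N) (Pair x))) = (\<integral>\<^sup>+ x. \<integral>\<^sup>+ y. G (x, y) \<partial>K x \<partial>lam)"
proof -
  have K_sub [measurable]: "K \<in> X \<rightarrow>\<^sub>M subprob_algebra N"
    using K by (rule measurable_prob_algebraD)
  have sets_K: "sets (K x) = sets N" if "x \<in> space X" for x
    using measurable_space[OF K that] by (simp add: space_prob_algebra)
  have "(\<lambda>x. distr (K x) (X \<Otimes>\<^sub>M N) (Pair x)) \<in> lam \<rightarrow>\<^sub>M subprob_algebra (X \<Otimes>\<^sub>M N)"
    unfolding measurable_cong_sets[OF sets_lam refl]
    by (rule measurable_distr2[where f="\<lambda>x y. (x, y)" and M=N]) auto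
  then have "(\<integral>\<^sup>+ p. G p \<partial>lam \<bind> (\<lambda>x. distr (K x) (X \<Otimes>\<^sub>M N) (Pair x)))
      = (\<integral>\<^sup>+ x. \<integral>\<^sup>+ p. G p \<partial>distr (K x) (X \<Otimes>\<^sub>M N) (Pair x) \<partial>lam)"
    by (rule nn_integral_bind[OF G])
  also have "\<dots> = (\<integral>\<^sup>+ x. \<integral>\<^sup>+ y. G (x, y) \<partial>K x \<partial>lam)"
    using sets_eq_imp_space_eq[OF sets_lam]
    by (intro nn_integral_cong) (auto simp: nn_integral_distr measurable_cong_sets[OF sets_K refl])
  finally show ?thesis .
qed

lemma finite_measure_disintegration_nn_integral:
  fixes \<mu> :: "('b \<times> real) measure"
  assumes "sets \<mu> = sets (X \<Otimes>\<^sub>M borel)" and "finite_measure \<mu>"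
  obtains K where "K \<in> X \<rightarrow>\<^sub>M prob_algebra borel"
    and "\<And>G. G \<in> borel_measurable (X \<Otimes>\<^sub>M borel) \<Longrightarrow>
      (\<integral>\<^sup>+p. G p \<partial>\<mu>) = (\<integral>\<^sup>+x. \<integral>\<^sup>+y. G (x, y) \<partial>K x \<partial>distr \<mu> X fst)"
proof -
  obtain K where K: "K \<in> X \<rightarrow>\<^sub>M prob_algebra borel"
    and \<mu>_eq: "\<mu> = distr \<mu> X fst \<bind> (\<lambda>x. distr (K x) (X \<Otimes>\<^sub>M borel) (Pair x))"
    using finite_measure_disintegration[OF assms] by blast
  have "(\<integral>\<^sup>+p. G p \<partial>\<mu>) = (\<integral>\<^sup>+x. \<integral>\<^sup>+y. G (x, y) \<partial>K x \<partial>distr \<mu> X fst)"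
    if "G \<in> borel_measurable (X \<Otimes>\<^sub>M borel)" for G
    by (subst \<mu>_eq) (rule nn_integral_bind_distr_Pair[OF K _ that], simp)
  with K show ?thesis by (rule that)
qed

lemma kernel_null_on_nonpos:
  assumes K0: "K0 \<in> X \<rightarrow>\<^sub>M prob_algebra (borel :: real measure)" and sets_lam: "sets lam = sets X"
    and null: "(\<integral>\<^sup>+x. \<integral>\<^sup>+y. indicator (space X \<times> {..0}) (x, y) \<partial>K0 x \<partial>lam) = 0"
  obtains K where "K \<in> X \<rightarrow>\<^sub>M prob_algebra borel" and "\<And>x. emeasure (K x) {..0} = 0"
    and "AE x in lam. K x = K0 x"
proof
  have [measurable]: "K0 \<in> X \<rightarrow>\<^sub>M subprob_algebra borel"
    using K0 by (rule measurable_prob_algebraD)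
  have "(\<integral>\<^sup>+x. emeasure (K0 x) {..0} \<partial>lam) = (\<integral>\<^sup>+x. \<integral>\<^sup>+y. indicator (space X \<times> {..0}) (x, y) \<partial>K0 x \<partial>lam)"
  proof (intro nn_integral_cong)
    fix x assume "x \<in> space lam"
    then have "sets (K0 x) = sets borel" "x \<in> space X"
      using measurable_space[OF K0, of x] sets_eq_imp_space_eq[OF sets_lam]
      by (auto simp: space_prob_algebra)
    then show "emeasure (K0 x) {..0} = (\<integral>\<^sup>+y. indicator (space X \<times> {..0}) (x, y) \<partial>K0 x)"
      by (simp add: indicator_times flip: nn_integral_indicator)
  qed
  with null have "(\<integral>\<^sup>+x. emeasure (K0 x) {..0} \<partial>lam) = 0" by simp
  then have AE_null: "AE x in lam. emeasure (K0 x) {..0} = 0"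
    by (subst (asm) nn_integral_0_iff_AE) (auto simp: measurable_cong_sets[OF sets_lam refl])
  define K where "K x = (if emeasure (K0 x) {..0} = 0 then K0 x else return borel 1)" for x
  show "K \<in> X \<rightarrow>\<^sub>M prob_algebra borel"
    unfolding K_def
    by (intro measurable_If K0 measurable_const) (auto simp: space_prob_algebra prob_space_return)
  show "emeasure (K x) {..0} = 0" for x by (simp add: K_def)
  show "AE x in lam. K x = K0 x"
    using AE_null by eventually_elim (simp add: K_def)
qed

lemma measurable_pair_restrict_space2: "(\<lambda>x. x) \<in> M \<Otimes>\<^sub>M restrict_space N \<Omega> \<rightarrow>\<^sub>M M \<Otimes>\<^sub>M N"
proof -
  have "snd \<in> M \<Otimes>\<^sub>M restrict_space N \<Omega> \<rightarrow>\<^sub>M N"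
    using measurable_compose[OF measurable_snd measurable_restrict_space1[OF measurable_ident]] by simp
  from measurable_Pair[OF measurable_fst this] show ?thesis by simp
qed

section \<open>Lower semicontinuity and positivity thresholds\<close>

lemma lsc_at_point_nn_integral:
  fixes h :: "real \<Rightarrow> 'b \<Rightarrow> ennreal"
  assumes lsc: "\<And>s. s \<in> space M \<Longrightarrow> lsc_at_point (\<lambda>r. h r s) r"
    and meas: "\<And>r. h r \<in> borel_measurable M"
  shows "lsc_at_point (\<lambda>r. \<integral>\<^sup>+s. h r s \<partial>M) r"
  unfolding lsc_at_point_def
proof (intro allI impI)
  fix c assume c: "c < (\<integral>\<^sup>+s. h r s \<partial>M)"
  show "eventually (\<lambda>r'. c < (\<integral>\<^sup>+s. h r' s \<partial>M)) (at r)"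
  proof (rule sequentially_imp_eventually_at, intro allI impI)
    fix f :: "nat \<Rightarrow> real" assume "(\<forall>n. f n \<noteq> r) \<and> f \<longlonglongrightarrow> r"
    then have f: "filterlim f (at r) sequentially"
      by (simp add: filterlim_at)
    have "h r s \<le> liminf (\<lambda>n. h (f n) s)" if "s \<in> space M" for s
      unfolding le_Liminf_iff
    proof (intro allI impI)
      fix y assume "y < h r s"
      then have "eventually (\<lambda>r'. y < h r' s) (at r)"
        using lsc[OF that] by (simp add: lsc_at_point_def)
      then show "eventually (\<lambda>n. y < h (f n) s) sequentially"
        using f by (rule eventually_compose_filterlim)
    qed
    then have "(\<integral>\<^sup>+s. h r s \<partial>M) \<le> (\<integral>\<^sup>+s. liminf (\<lambda>n. h (f n) s) \<partial>M)"
      by (intro nn_integral_mono)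
    also have "\<dots> \<le> liminf (\<lambda>n. \<integral>\<^sup>+s. h (f n) s \<partial>M)"
      by (rule nn_integral_liminf) (rule meas)
    finally show "eventually (\<lambda>n. c < (\<integral>\<^sup>+s. h (f n) s \<partial>M)) sequentially"
      using c by (intro less_LiminfD) simp
  qed
qed

lemma positivity_threshold:
  fixes P :: "real \<Rightarrow> bool"
  assumes ex: "\<exists>r>0. P r"
    and down: "\<And>r r'. 0 < r' \<Longrightarrow> r' \<le> r \<Longrightarrow> P r \<Longrightarrow> P r'"
    and up: "\<And>r. 0 < r \<Longrightarrow> P r \<Longrightarrow> \<exists>r'>r. P r'"
  shows "\<exists>b. 0 < b \<and> (\<forall>r>0. ereal r < b \<longrightarrow> P r) \<and> (b < \<infinity> \<longrightarrow> (\<forall>r>0. b \<le> ereal r \<longrightarrow> \<not> P r))"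
proof -
  define b where "b = Sup (ereal ` {r. 0 < r \<and> P r})"
  have upper: "ereal r \<le> b" if "0 < r" "P r" for r
    unfolding b_def using that by (intro Sup_upper) auto
  obtain r0 where "0 < r0" "P r0" using ex by blast
  then have "0 < b" using upper[of r0] by (metis ereal_less(2) order_less_le_trans)
  moreover have "P r" if "0 < r" "ereal r < b" for r
  proof -
    obtain r' where "0 < r'" "P r'" "r < r'" using \<open>ereal r < b\<close> by (auto simp: b_def less_Sup_iff)
    then show "P r" using down[OF \<open>0 < r\<close> _ \<open>P r'\<close>] by simp
  qed
  moreover have "\<not> P r" if "0 < r" "b \<le> ereal r" for r
  proof
    assume "P r"
    then obtain r' where "r < r'" "P r'" using up[OF \<open>0 < r\<close>] by blast
    with upper[of r'] \<open>0 < r\<close> have "ereal r' \<le> ereal r"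
      using \<open>b \<le> ereal r\<close> by (meson less_trans order_trans)
    with \<open>r < r'\<close> show False by simp
  qed
  ultimately show ?thesis by blast
qed

lemma emeasure_superlevel_pos_open:
  fixes P :: "real measure" and f :: "real \<Rightarrow> real" and r :: real
  assumes sets_P: "sets P = sets borel" and [measurable]: "f \<in> borel_measurable borel"
    and pos: "0 < emeasure P {s. r < f s}"
  shows "\<exists>r'>r. 0 < emeasure P {s. r' < f s}"
proof -
  have meas: "{s. c < f s} \<in> sets P" for c
    unfolding sets_P by measurable
  have union: "{s. r < f s} = (\<Union>n. {s. r + 1 / Suc n < f s})"
  proof safe
    fix s assume "r < f s"
    then obtain n where "1 / Suc n < f s - r" using reals_Archimedean[of "f s - r"]
      by (auto simp: inverse_eq_divide)
    then have "r + 1 / Suc n < f s" by simp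
    then show "s \<in> (\<Union>n. {s. r + 1 / Suc n < f s})" by blast
  qed (smt (verit) divide_pos_pos of_nat_0_less_iff zero_less_Suc)
  have inc: "incseq (\<lambda>n. {s. r + 1 / Suc n < f s})"
  proof (intro monoI subsetI)
    fix m n :: nat and s assume "m \<le> n" "s \<in> {s. r + 1 / Suc m < f s}"
    moreover have "1 / Suc n \<le> 1 / Suc m" using \<open>m \<le> n\<close> by (intro divide_left_mono) auto
    ultimately show "s \<in> {s. r + 1 / Suc n < f s}" by auto
  qed
  have "(SUP n. emeasure P {s. r + 1 / Suc n < f s}) = emeasure P {s. r < f s}"
    unfolding union by (rule SUP_emeasure_incseq[OF _ inc]) (use meas in blast)
  with pos have "0 < (SUP n. emeasure P {s. r + 1 / Suc n < f s})" by simp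
  then obtain n where "0 < emeasure P {s. r + 1 / Suc n < f s}"
    unfolding less_SUP_iff by blast
  then show ?thesis by (intro exI[of _ "r + 1 / Suc n"]) auto
qed

lemma emeasure_density_Ioi_pos:
  fixes f :: "real \<Rightarrow> ennreal"
  assumes [measurable]: "f \<in> borel_measurable borel"
    and "0 < r0" and pos: "\<And>r. 0 < r \<Longrightarrow> r \<le> r0 \<Longrightarrow> 0 < f r"
  shows "0 < emeasure (density (restrict_space lborel {0<..}) f) {0<..}"
proof (rule ccontr)
  assume "\<not> ?thesis"
  moreover have "emeasure (density (restrict_space lborel {0<..}) f) {0<..}
      = (\<integral>\<^sup>+r. f r * indicator {0<..} r \<partial>lborel)"
    by (subst emeasure_density)
       (auto simp: sets_restrict_space_iff nn_integral_restrict_space intro: measurable_restrict_space1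
         intro!: nn_integral_cong split: split_indicator)
  ultimately have "(\<integral>\<^sup>+r. f r * indicator {0<..} r \<partial>lborel) = 0" by simp
  then have "AE r in lborel. f r * indicator {0<..} r = 0"
    by (subst (asm) nn_integral_0_iff_AE) auto
  then have "AE r in lborel. r \<notin> {0<..r0}"
    by eventually_elim (auto simp: indicator_def dest: pos)
  then have "{0<..r0} \<in> null_sets lborel"
    by (subst AE_iff_null_sets) auto
  then show False using \<open>0 < r0\<close> by (simp add: null_sets_def)
qed

section \<open>The arcsine density\<close>

definition arcsine_density :: "real \<Rightarrow> real \<Rightarrow> real" where
  "arcsine_density B r = (if 0 < r \<and> r < B then 2 / pi * (1 / sqrt (B\<^sup>2 - r\<^sup>2)) else 0)"

lemma measurable_arcsine_density [measurable]:
  assumes [measurable]: "f \<in> borel_measurable M" "g \<in> borel_measurable M"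
  shows "(\<lambda>x. arcsine_density (f x) (g x)) \<in> borel_measurable M"
  unfolding arcsine_density_def by measurable

lemma arcsine_density_nonneg: "0 \<le> arcsine_density B r"
  by (simp add: arcsine_density_def)

lemma arcsine_density_nonpos [simp]: "r \<le> 0 \<Longrightarrow> arcsine_density B r = 0"
  by (simp add: arcsine_density_def)

lemma arcsine_density_pos_iff: "0 < arcsine_density B r \<longleftrightarrow> 0 < r \<and> r < B"
  by (auto simp: arcsine_density_def power_strict_mono)

lemma nn_integral_arcsine_density:
  assumes B: "0 < B"
  shows "(\<integral>\<^sup>+ r. ennreal (arcsine_density B r) \<partial>lborel) = 1"
proof -
  define f where "f r = (if 0 < r \<and> r < B then 1 / sqrt (B\<^sup>2 - r\<^sup>2) else 0)" for r
  have "((\<lambda>r. arcsin (r / B)) has_vector_derivative f r) (at r)" if r: "r \<in> {0<..<B}" for r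
  proof -
    have r1: "-1 < r / B" "r / B < 1" using r B by (auto simp: field_simps)
    have "((\<lambda>r. arcsin (r / B)) has_real_derivative (inverse (sqrt (1 - (r/B)\<^sup>2)) * (1 / B))) (at r)"
      by (rule DERIV_chain2[where f=arcsin and g="\<lambda>r. r / B", OF DERIV_arcsin[OF r1]])
         (use B in \<open>auto intro!: derivative_eq_intros\<close>)
    moreover have "1 - (r/B)\<^sup>2 = (B\<^sup>2 - r\<^sup>2) / B\<^sup>2"
      using B by (simp add: field_simps power2_eq_square)
    then have "sqrt (1 - (r/B)\<^sup>2) = sqrt (B\<^sup>2 - r\<^sup>2) / B"
      using B by (simp add: real_sqrt_divide)
    ultimately show ?thesis
      using r B by (simp add: f_def divide_simps has_real_derivative_iff_has_vector_derivative)
  qed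
  moreover have "continuous_on {0..B} (\<lambda>r. arcsin (r / B))"
    using B by (intro continuous_intros) (auto simp: field_simps)
  ultimately have "(f has_integral (arcsin (B / B) - arcsin (0 / B))) {0..B}"
    using B by (intro fundamental_theorem_of_calculus_interior) auto
  then have "(f has_integral pi / 2) {0..B}" using B by simp
  then have "(\<integral>\<^sup>+ r. indicator {0..B} r * f r \<partial>lborel) = pi / 2"
    by (rule nn_integral_has_integral_lebesgue[rotated]) (auto simp: f_def)
  moreover have "(\<integral>\<^sup>+ r. ennreal (arcsine_density B r) \<partial>lborel)
      = ennreal (2 / pi) * (\<integral>\<^sup>+ r. indicator {0..B} r * f r \<partial>lborel)"
    by (subst nn_integral_cmult[symmetric])
       (auto intro!: nn_integral_cong simp: arcsine_density_def f_def ennreal_mult[symmetric]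
         split: split_indicator)
  ultimately show ?thesis by (simp flip: ennreal_mult)
qed

lemma nn_integral_arcsine_density_min_le:
  assumes "0 < B"
  shows "(\<integral>\<^sup>+ r. ennreal (arcsine_density B r) * ennreal (min 1 (r\<^sup>2)) \<partial>lborel) \<le> ennreal (min 1 (B\<^sup>2))"
proof -
  have "(\<integral>\<^sup>+ r. ennreal (arcsine_density B r) * ennreal (min 1 (r\<^sup>2)) \<partial>lborel)
      \<le> (\<integral>\<^sup>+ r. ennreal (arcsine_density B r) * ennreal (min 1 (B\<^sup>2)) \<partial>lborel)"
  proof (intro nn_integral_mono)
    fix r
    show "ennreal (arcsine_density B r) * ennreal (min 1 (r\<^sup>2))
        \<le> ennreal (arcsine_density B r) * ennreal (min 1 (B\<^sup>2))"
    proof (cases "0 < r \<and> r < B")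
      case True
      then have "r\<^sup>2 \<le> B\<^sup>2" by (intro power_mono) auto
      then show ?thesis by (intro mult_left_mono ennreal_leI) auto
    qed (auto simp: arcsine_density_def)
  qed
  also have "\<dots> = ennreal (min 1 (B\<^sup>2))"
    using assms by (simp add: nn_integral_multc nn_integral_arcsine_density)
  finally show ?thesis .
qed

lemma lsc_at_point_arcsine_density:
  "lsc_at_point (\<lambda>r. ennreal (arcsine_density B r * c)) r"
proof (cases "0 < r \<and> r < B \<and> 0 \<le> c")
  case True
  define g where "g x = 2 / pi * (1 / sqrt (B\<^sup>2 - x\<^sup>2)) * c" for x
  have "r\<^sup>2 < B\<^sup>2" using True by (intro power_strict_mono) auto
  then have "isCont g r" unfolding g_def by (intro continuous_intros) auto
  moreover have "eventually (\<lambda>x. arcsine_density B x * c = g x) (nhds r)"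
    using True eventually_nhds_in_open[of "{0<..<B}" r]
    by (auto elim!: eventually_mono simp: arcsine_density_def g_def)
  ultimately have "isCont (\<lambda>x. arcsine_density B x * c) r"
    using True by (subst isCont_cong) (auto simp: arcsine_density_def g_def)
  then have "((\<lambda>x. ennreal (arcsine_density B x * c)) \<longlongrightarrow> ennreal (arcsine_density B r * c)) (at r)"
    unfolding isCont_def by (rule tendsto_ennrealI)
  then show ?thesis
    unfolding lsc_at_point_def by (auto intro: order_tendstoD)
next
  case False
  have "arcsine_density B r * c \<le> 0"
  proof (cases "0 \<le> c")
    case True
    with False have "arcsine_density B r = 0" by (auto simp: arcsine_density_def)
    then show ?thesis by simp
  next
    case False
    then show ?thesis by (intro mult_nonneg_nonpos arcsine_density_nonneg) simp
  qed
  then have "ennreal (arcsine_density B r * c) = 0" by (rule ennreal_neg)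
  then show ?thesis by (simp add: lsc_at_point_def)
qed

section \<open>The operator \<open>A\<^sub>k\<close>\<close>

definition a_kernel_bound :: "nat \<Rightarrow> real \<Rightarrow> real" where
  "a_kernel_bound k s = (if k = 1 then sqrt s else s)"

lemma a_kernel_eq_arcsine_density: "a_kernel k r s = arcsine_density (a_kernel_bound k s) r"
proof -
  have "(sqrt s)\<^sup>2 = s" if "0 < r" "r < sqrt s"
  proof -
    have "0 < sqrt s" using that by linarith
    then show ?thesis by simp
  qed
  then show ?thesis
    by (auto simp: a_kernel_def a1_def a2_def arcsine_density_def a_kernel_bound_def)
qed

lemma measurable_a_kernel_bound [measurable]: "a_kernel_bound k \<in> borel_measurable borel"
  unfolding a_kernel_bound_def by measurable

lemma a_kernel_bound_pos: "0 < s \<Longrightarrow> 0 < a_kernel_bound k s"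
  by (simp add: a_kernel_bound_def)

lemma a_kernel_bound_sq: "k \<in> {1, 2} \<Longrightarrow> 0 \<le> s \<Longrightarrow> (a_kernel_bound k s)\<^sup>2 = s ^ k"
  by (auto simp: a_kernel_bound_def)

lemma nn_integral_indicator_const_mult:
  "(\<integral>\<^sup>+ r. indicator A x * f r \<partial>M) = indicator A x * (\<integral>\<^sup>+ r. f r \<partial>M)"
  by (simp split: split_indicator)

lemma A_op_eq_distr:
  fixes nu :: "'a::euclidean_space measure"
  assumes [measurable_cong]: "sets nu = sets borel"
  shows "A_op k nu = distr (density (nu \<Otimes>\<^sub>M lborel)
     (\<lambda>(x, r). indicator (UNIV - {0}) x * indicator {0<..} r * ennreal (a_kernel k r (norm x))))
     borel (\<lambda>(x, r). (r / norm x) *\<^sub>R x)" (is "_ = ?M")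
proof -
  let ?H = "\<lambda>(x::'a, r::real). indicator (UNIV - {0}) x * indicator {0<..} r * ennreal (a_kernel k r (norm x))"
  have [measurable]: "?H \<in> borel_measurable (nu \<Otimes>\<^sub>M lborel)"
    unfolding a_kernel_eq_arcsine_density by measurable
  have "A_fun k nu B = emeasure ?M B" if [measurable]: "B \<in> sets borel" for B
  proof -
    have "emeasure ?M B = (\<integral>\<^sup>+ p. indicator B p \<partial>?M)"
      by (subst nn_integral_indicator) auto
    also have "\<dots> = (\<integral>\<^sup>+ p. ?H p * indicator B ((\<lambda>(x, r). (r / norm x) *\<^sub>R x) p) \<partial>(nu \<Otimes>\<^sub>M lborel))"
      by (subst nn_integral_distr) (auto simp: nn_integral_density)
    also have "\<dots> = (\<integral>\<^sup>+ x. \<integral>\<^sup>+ r. ?H (x, r) * indicator B ((r / norm x) *\<^sub>R x) \<partial>lborel \<partial>nu)"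
      using lborel.nn_integral_fst[of "\<lambda>p. ?H p * indicator B ((\<lambda>(x, r). (r / norm x) *\<^sub>R x) p)" nu]
      by simp
    also have "\<dots> = A_fun k nu B"
      unfolding A_fun_def
      by (simp add: mult.assoc nn_integral_indicator_const_mult)
    finally show ?thesis ..
  qed
  then have "A_op k nu = measure_of UNIV (sets borel) (emeasure ?M)"
    unfolding A_op_def by (intro measure_of_eq) (auto simp: sets.sigma_sets_eq[of borel, simplified])
  also have "\<dots> = ?M"
    using measure_of_of_measure[of ?M] by simp
  finally show ?thesis .
qed

lemma nn_integral_A_op:
  fixes nu :: "'a::euclidean_space measure"
  assumes [measurable_cong]: "sets nu = sets borel" and [measurable]: "g \<in> borel_measurable borel"
  shows "(\<integral>\<^sup>+ y. g y \<partial>A_op k nu) = (\<integral>\<^sup>+ x. indicator (UNIV - {0}) x *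
      (\<integral>\<^sup>+ r. ennreal (arcsine_density (a_kernel_bound k (norm x)) r) * g ((r / norm x) *\<^sub>R x) \<partial>lborel) \<partial>nu)"
proof -
  let ?H = "\<lambda>(x::'a, r::real). indicator (UNIV - {0}) x * indicator {0<..} r * ennreal (a_kernel k r (norm x))"
  have [measurable]: "?H \<in> borel_measurable (nu \<Otimes>\<^sub>M lborel)"
    unfolding a_kernel_eq_arcsine_density by measurable
  have "(\<integral>\<^sup>+ y. g y \<partial>A_op k nu) = (\<integral>\<^sup>+ p. ?H p * g ((\<lambda>(x, r). (r / norm x) *\<^sub>R x) p) \<partial>(nu \<Otimes>\<^sub>M lborel))"
    unfolding A_op_eq_distr[OF assms(1)] by (simp add: nn_integral_distr nn_integral_density)
  also have "\<dots> = (\<integral>\<^sup>+ x. \<integral>\<^sup>+ r. ?H (x, r) * g ((r / norm x) *\<^sub>R x) \<partial>lborel \<partial>nu)"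
    using lborel.nn_integral_fst[of "\<lambda>p. ?H p * g ((\<lambda>(x, r). (r / norm x) *\<^sub>R x) p)" nu] by simp
  also have "\<dots> = (\<integral>\<^sup>+ x. indicator (UNIV - {0}) x *
      (\<integral>\<^sup>+ r. ennreal (arcsine_density (a_kernel_bound k (norm x)) r) * g ((r / norm x) *\<^sub>R x) \<partial>lborel) \<partial>nu)"
    by (intro nn_integral_cong)
       (auto simp: a_kernel_eq_arcsine_density mult.assoc nn_integral_indicator_const_mult
         intro!: nn_integral_cong split: split_indicator)
  finally show ?thesis .
qed

lemma levy_measure_A_op:
  fixes nu :: "'a::euclidean_space measure"
  assumes k: "k \<in> {1, 2}" and nu: "levy_measure_k k nu"
  shows "levy_measure (A_op k nu)"
proof -
  from nu have sets_nu: "sets nu = sets borel"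
    and fin: "(\<integral>\<^sup>+ x. ennreal (min 1 (norm x ^ k)) \<partial>nu) < \<infinity>"
    by (auto simp: levy_measure_k_def)
  have sets_A: "sets (A_op k nu) = sets borel"
    by (simp add: A_op_eq_distr[OF sets_nu])
  have "emeasure (A_op k nu) {0} = (\<integral>\<^sup>+ y. indicator {0} y \<partial>A_op k nu)"
    using sets_A by simp
  also have "\<dots> = (\<integral>\<^sup>+ x. 0 \<partial>nu)"
    unfolding nn_integral_A_op[OF sets_nu borel_measurable_indicator[OF closed_singleton[THEN borel_closed]]]
  proof (intro nn_integral_cong)
    fix x :: 'a
    have "(\<integral>\<^sup>+ r. ennreal (arcsine_density (a_kernel_bound k (norm x)) r) * indicator {0} ((r / norm x) *\<^sub>R x) \<partial>lborel)
        = (\<integral>\<^sup>+ (r::real). 0 \<partial>lborel)" if "x \<noteq> 0"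
      by (intro nn_integral_cong) (auto simp: indicator_def that)
    then show "indicator (UNIV - {0}) x * (\<integral>\<^sup>+ r. ennreal (arcsine_density (a_kernel_bound k (norm x)) r)
        * indicator {0} ((r / norm x) *\<^sub>R x) \<partial>lborel) = 0"
      by (cases "x = 0") simp_all
  qed
  finally have null_0: "emeasure (A_op k nu) {0} = 0" by simp
  have "(\<integral>\<^sup>+ y. ennreal (min 1 (norm y ^ 2)) \<partial>A_op k nu)
      = (\<integral>\<^sup>+ x. indicator (UNIV - {0}) x * (\<integral>\<^sup>+ r. ennreal (arcsine_density (a_kernel_bound k (norm x)) r)
          * ennreal (min 1 (r\<^sup>2)) \<partial>lborel) \<partial>nu)"
    by (subst nn_integral_A_op[OF sets_nu])
       (auto intro!: nn_integral_cong simp: indicator_def)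
  also have "\<dots> \<le> (\<integral>\<^sup>+ x. ennreal (min 1 (norm x ^ k)) \<partial>nu)"
  proof (intro nn_integral_mono)
    fix x :: 'a
    show "indicator (UNIV - {0}) x * (\<integral>\<^sup>+ r. ennreal (arcsine_density (a_kernel_bound k (norm x)) r)
          * ennreal (min 1 (r\<^sup>2)) \<partial>lborel) \<le> ennreal (min 1 (norm x ^ k))"
      using nn_integral_arcsine_density_min_le[OF a_kernel_bound_pos[of "norm x" k]]
      by (cases "x = 0") (simp_all add: a_kernel_bound_sq[OF k])
  qed
  finally show ?thesis
    using fin sets_A null_0 by (simp add: levy_measure_k_def le_less_trans)
qed

lemma nn_integral_A_op_polar_coordinates:
  fixes nu :: "'a::euclidean_space measure"
  assumes sets_nu: "sets nu = sets borel" and [measurable]: "g \<in> borel_measurable borel"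
  shows "(\<integral>\<^sup>+ y. g y \<partial>A_op k nu) = (\<integral>\<^sup>+ x. indicator (UNIV - {0}) x * ennreal (min 1 (norm x ^ k)) *
      (\<integral>\<^sup>+ r. ennreal (a_kernel k r (norm x) / min 1 (norm x ^ k)) * g (r *\<^sub>R sgn x) \<partial>lborel) \<partial>nu)"
  unfolding nn_integral_A_op[OF assms]
proof (intro nn_integral_cong)
  fix x :: 'a
  let ?w = "min 1 (norm x ^ k)"
  have "ennreal ?w * (ennreal (a_kernel k r (norm x) / ?w) * g (r *\<^sub>R sgn x))
      = ennreal (arcsine_density (a_kernel_bound k (norm x)) r) * g ((r / norm x) *\<^sub>R x)"
    if "x \<noteq> 0" for r
  proof -
    have "0 < ?w" using that by (simp add: zero_less_power)
    then have "ennreal ?w * ennreal (a_kernel k r (norm x) / ?w) = ennreal (a_kernel k r (norm x))"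
      using arcsine_density_nonneg by (simp add: a_kernel_eq_arcsine_density flip: ennreal_mult)
    moreover have "r *\<^sub>R sgn x = (r / norm x) *\<^sub>R x" by (simp add: sgn_div_norm divide_inverse)
    ultimately show ?thesis by (simp add: a_kernel_eq_arcsine_density mult.assoc[symmetric])
  qed
  moreover have "(\<lambda>r. ennreal (a_kernel k r (norm x) / ?w) * g (r *\<^sub>R sgn x)) \<in> borel_measurable lborel"
    unfolding a_kernel_eq_arcsine_density by simp
  ultimately show "indicator (UNIV - {0}) x * (\<integral>\<^sup>+ r. ennreal (arcsine_density (a_kernel_bound k (norm x)) r)
        * g ((r / norm x) *\<^sub>R x) \<partial>lborel)
      = indicator (UNIV - {0}) x * ennreal ?w * (\<integral>\<^sup>+ r. ennreal (a_kernel k r (norm x) / ?w) * g (r *\<^sub>R sgn x) \<partial>lborel)"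
    by (cases "x = 0") (simp_all add: mult.assoc nn_integral_cmult[symmetric])
qed

section \<open>Polar decomposition of \<open>A\<^sub>k(\<nu>)\<close>\<close>

lemma polar_disintegration:
  fixes nu :: "'a::euclidean_space measure" and w :: "real \<Rightarrow> real"
  assumes sets_nu [measurable_cong]: "sets nu = sets borel" and [measurable]: "w \<in> borel_measurable borel"
    and fin: "(\<integral>\<^sup>+x. indicator (UNIV - {0}) x * ennreal (w (norm x)) \<partial>nu) < \<infinity>"
  obtains lam K where "sets lam = sets (restrict_space borel unit_sphere)"
    and "K \<in> restrict_space borel unit_sphere \<rightarrow>\<^sub>M prob_algebra borel"
    and "\<And>\<xi>. emeasure (K \<xi>) {..0} = 0"
    and "\<And>G. G \<in> borel_measurable (restrict_space borel unit_sphere \<Otimes>\<^sub>M borel) \<Longrightarrow>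
      (\<integral>\<^sup>+x. indicator (UNIV - {0}) x * ennreal (w (norm x)) * G (sgn x, norm x) \<partial>nu)
        = (\<integral>\<^sup>+\<xi>. \<integral>\<^sup>+s. G (\<xi>, s) \<partial>K \<xi> \<partial>lam)"
proof -
  define X where "X = restrict_space (borel :: 'a measure) unit_sphere"
  obtain \<xi>0 :: 'a where \<xi>0: "\<xi>0 \<in> unit_sphere"
    using norm_Basis nonempty_Basis by fastforce
  \<comment> \<open>The direction assigned to 0 is irrelevant but has to lie in the sphere.\<close>
  define pol where "pol x = (if x = 0 then \<xi>0 else sgn x)" for x :: 'a
  define wt where "wt x = indicator (UNIV - {0}) x * ennreal (w (norm x))" for x :: 'a
  define \<mu> where "\<mu> = distr (density nu wt) (X \<Otimes>\<^sub>M borel) (\<lambda>x. (pol x, norm x))"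
  have [measurable]: "wt \<in> borel_measurable borel"
    unfolding wt_def by measurable
  have "pol \<in> borel_measurable borel"
    unfolding pol_def by measurable
  then have [measurable]: "pol \<in> borel \<rightarrow>\<^sub>M X"
    unfolding X_def using \<xi>0 by (intro measurable_restrict_space2) (auto simp: pol_def norm_sgn)
  have [measurable]: "(\<lambda>x. (pol x, norm x)) \<in> density nu wt \<rightarrow>\<^sub>M X \<Otimes>\<^sub>M borel"
    by (simp add: measurable_cong_sets[OF sets_nu refl])
  have integral_\<mu>: "(\<integral>\<^sup>+p. G p \<partial>\<mu>) = (\<integral>\<^sup>+x. wt x * G (pol x, norm x) \<partial>nu)"
    if [measurable]: "G \<in> borel_measurable (X \<Otimes>\<^sub>M borel)" for G
    unfolding \<mu>_def by (simp add: nn_integral_distr nn_integral_density)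
  have "finite_measure \<mu>"
  proof (rule finite_measureI)
    have "emeasure \<mu> (space \<mu>) = (\<integral>\<^sup>+x. wt x \<partial>nu)" using integral_\<mu>[of "\<lambda>p. 1"] by simp
    then show "emeasure \<mu> (space \<mu>) \<noteq> \<infinity>" using fin by (simp add: wt_def)
  qed
  moreover have "sets \<mu> = sets (X \<Otimes>\<^sub>M borel)" by (simp add: \<mu>_def)
  ultimately obtain K0 where K0: "K0 \<in> X \<rightarrow>\<^sub>M prob_algebra borel"
    and disintegration_\<mu>: "\<And>G. G \<in> borel_measurable (X \<Otimes>\<^sub>M borel) \<Longrightarrow>
      (\<integral>\<^sup>+p. G p \<partial>\<mu>) = (\<integral>\<^sup>+\<xi>. \<integral>\<^sup>+s. G (\<xi>, s) \<partial>K0 \<xi> \<partial>distr \<mu> X fst)"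
    using finite_measure_disintegration_nn_integral by blast
  let ?lam = "distr \<mu> X fst"
  have disintegration: "(\<integral>\<^sup>+x. wt x * G (pol x, norm x) \<partial>nu) = (\<integral>\<^sup>+\<xi>. \<integral>\<^sup>+s. G (\<xi>, s) \<partial>K0 \<xi> \<partial>?lam)"
    if "G \<in> borel_measurable (X \<Otimes>\<^sub>M borel)" for G
    using disintegration_\<mu>[OF that] integral_\<mu>[OF that] by simp
  \<comment> \<open>For almost every direction the radial part lives on \<open>(0,\<infinity>)\<close>, as \<open>x = 0\<close> carries no weight.\<close>
  have "(\<integral>\<^sup>+\<xi>. \<integral>\<^sup>+s. indicator (space X \<times> {..0}) (\<xi>, s) \<partial>K0 \<xi> \<partial>?lam)
      = (\<integral>\<^sup>+x. wt x * indicator (space X \<times> {..0}) (pol x, norm x) \<partial>nu)"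
    by (rule disintegration[symmetric]) measurable
  also have "\<dots> = 0"
    by (auto simp: wt_def indicator_def intro!: nn_integral_zero')
  finally obtain K where K: "K \<in> X \<rightarrow>\<^sub>M prob_algebra borel" and K_nonpos: "\<And>\<xi>. emeasure (K \<xi>) {..0} = 0"
    and AE_K: "AE \<xi> in ?lam. K \<xi> = K0 \<xi>"
    using kernel_null_on_nonpos[OF K0 sets_distr] by blast
  have polar: "(\<integral>\<^sup>+x. indicator (UNIV - {0}) x * ennreal (w (norm x)) * G (sgn x, norm x) \<partial>nu)
      = (\<integral>\<^sup>+\<xi>. \<integral>\<^sup>+s. G (\<xi>, s) \<partial>K \<xi> \<partial>?lam)"
    if "G \<in> borel_measurable (restrict_space borel unit_sphere \<Otimes>\<^sub>M borel)" for G
  proof -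
    have "(\<integral>\<^sup>+x. indicator (UNIV - {0}) x * ennreal (w (norm x)) * G (sgn x, norm x) \<partial>nu)
        = (\<integral>\<^sup>+x. wt x * G (pol x, norm x) \<partial>nu)"
      by (intro nn_integral_cong) (simp add: wt_def pol_def indicator_def)
    also have "\<dots> = (\<integral>\<^sup>+\<xi>. \<integral>\<^sup>+s. G (\<xi>, s) \<partial>K0 \<xi> \<partial>?lam)"
      using that by (intro disintegration) (simp add: X_def)
    also have "\<dots> = (\<integral>\<^sup>+\<xi>. \<integral>\<^sup>+s. G (\<xi>, s) \<partial>K \<xi> \<partial>?lam)"
      using AE_K by (intro nn_integral_cong_AE) (auto elim!: eventually_mono)
    finally show ?thesis .
  qed
  have "sets ?lam = sets (restrict_space borel unit_sphere)" by (simp add: X_def)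
  then show ?thesis using K K_nonpos polar unfolding X_def by (rule that)
qed

definition radial_density :: "nat \<Rightarrow> real measure \<Rightarrow> real \<Rightarrow> ennreal" where
  "radial_density k P r = (\<integral>\<^sup>+s. ennreal (a_kernel k r s / min 1 (s ^ k)) \<partial>P)"

lemma radial_density_nonpos: "r \<le> 0 \<Longrightarrow> radial_density k P r = 0"
  by (simp add: radial_density_def a_kernel_eq_arcsine_density)

lemma measurable_radial_density:
  assumes [measurable]: "K \<in> X \<rightarrow>\<^sub>M subprob_algebra borel"
  shows "(\<lambda>p. radial_density k (K (fst p)) (snd p)) \<in> borel_measurable (X \<Otimes>\<^sub>M borel)"
  unfolding radial_density_def a_kernel_eq_arcsine_density
  by (rule nn_integral_measurable_subprob_algebra2[where N=borel]) measurable

lemma lsc_at_point_radial_density: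
  assumes "sets P = sets borel"
  shows "lsc_at_point (radial_density k P) r"
  unfolding radial_density_def a_kernel_eq_arcsine_density divide_inverse
  using assms by (intro lsc_at_point_nn_integral lsc_at_point_arcsine_density) auto

lemma radial_density_pos_iff:
  assumes sets_P: "sets P = sets borel" and "0 < r"
  shows "0 < radial_density k P r \<longleftrightarrow> 0 < emeasure P {s. r < a_kernel_bound k s}"
proof -
  have integrand_0: "ennreal (a_kernel k r s / min 1 (s ^ k)) = 0 \<longleftrightarrow> s \<notin> {s. r < a_kernel_bound k s}" for s
  proof (cases "r < a_kernel_bound k s")
    case True
    then have "0 < a_kernel_bound k s" using \<open>0 < r\<close> by linarith
    then have "0 < s" by (auto simp: a_kernel_bound_def split: if_splits)
    have "0 < a_kernel k r s"
      using True \<open>0 < r\<close> by (simp add: a_kernel_eq_arcsine_density arcsine_density_pos_iff)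
    moreover have "0 < min 1 (s ^ k)" using \<open>0 < s\<close> by (simp add: zero_less_power)
    ultimately have "0 < a_kernel k r s / min 1 (s ^ k)" by (rule divide_pos_pos)
    then show ?thesis using True by (metis ennreal_eq_0_iff mem_Collect_eq not_le)
  next
    case False
    then show ?thesis by (simp add: a_kernel_eq_arcsine_density arcsine_density_def)
  qed
  have "(\<lambda>s. ennreal (a_kernel k r s / min 1 (s ^ k))) \<in> borel_measurable P"
    unfolding measurable_cong_sets[OF sets_P refl] a_kernel_eq_arcsine_density by measurable
  then have "radial_density k P r = 0 \<longleftrightarrow> (AE s in P. s \<notin> {s. r < a_kernel_bound k s})"
    unfolding radial_density_def by (simp only: nn_integral_0_iff_AE integrand_0)
  also have "\<dots> \<longleftrightarrow> emeasure P {s. r < a_kernel_bound k s} = 0"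
    using sets_P by (subst AE_iff_null_sets[symmetric]) (auto simp: null_sets_def)
  finally show ?thesis by (simp add: zero_less_iff_neq_zero)
qed

lemma radial_density_threshold:
  assumes sets_P: "sets P = sets borel" and "prob_space P" and null: "emeasure P {..0} = 0"
  shows "\<exists>b. 0 < b \<and> (\<forall>r>0. ereal r < b \<longrightarrow> 0 < radial_density k P r) \<and>
    (b < \<infinity> \<longrightarrow> (\<forall>r>0. b \<le> ereal r \<longrightarrow> radial_density k P r = 0))"
  unfolding not_gr_zero[symmetric]
proof (rule positivity_threshold)
  have "emeasure P ({..0} \<union> {0<..}) \<le> emeasure P {..0} + emeasure P {0<..}"
    by (rule emeasure_subadditive) (simp_all add: sets_P)
  moreover have "{..0} \<union> {0<..} = (UNIV :: real set)" by auto
  ultimately have "emeasure P UNIV \<le> emeasure P {..0} + emeasure P {0<..}" by simp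
  moreover have "emeasure P UNIV = 1"
    using prob_space.emeasure_space_1[OF \<open>prob_space P\<close>] sets_eq_imp_space_eq[OF sets_P] by simp
  moreover have "{s. 0 < a_kernel_bound k s} = {0<..}"
    by (auto simp: a_kernel_bound_def)
  ultimately have "1 \<le> emeasure P {s. 0 < a_kernel_bound k s}"
    using null by simp
  then have "0 < emeasure P {s. 0 < a_kernel_bound k s}"
    by (rule order_less_le_trans[OF zero_less_one])
  then obtain r where "0 < r" "0 < emeasure P {s. r < a_kernel_bound k s}"
    using emeasure_superlevel_pos_open[OF sets_P measurable_a_kernel_bound] by blast
  then show "\<exists>r>0. 0 < radial_density k P r"
    using radial_density_pos_iff[OF sets_P] by blast
next
  fix r r' :: real assume "0 < r'" "r' \<le> r" "0 < radial_density k P r"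
  moreover have "emeasure P {s. r < a_kernel_bound k s} \<le> emeasure P {s. r' < a_kernel_bound k s}"
    using sets_P \<open>r' \<le> r\<close> by (intro emeasure_mono) auto
  ultimately show "0 < radial_density k P r'"
    by (auto simp: radial_density_pos_iff[OF sets_P])
next
  fix r :: real assume "0 < r" "0 < radial_density k P r"
  then have "0 < emeasure P {s. r < a_kernel_bound k s}"
    by (simp add: radial_density_pos_iff[OF sets_P])
  then obtain r' where "r < r'" "0 < emeasure P {s. r' < a_kernel_bound k s}"
    using emeasure_superlevel_pos_open[OF sets_P measurable_a_kernel_bound] by blast
  with \<open>0 < r\<close> show "\<exists>r'>r. 0 < radial_density k P r'"
    by (auto simp: radial_density_pos_iff[OF sets_P])
qed

lemma radial_density_thresholds:
  assumes K: "K \<in> restrict_space borel unit_sphere \<rightarrow>\<^sub>M prob_algebra borel"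
    and null: "\<And>\<xi>. emeasure (K \<xi>) {..0} = 0"
  shows "\<exists>b. \<forall>\<xi>\<in>unit_sphere. 0 < b \<xi> \<and> (\<forall>r>0. ereal r < b \<xi> \<longrightarrow> 0 < radial_density k (K \<xi>) r) \<and>
    (b \<xi> < \<infinity> \<longrightarrow> (\<forall>r>0. b \<xi> \<le> ereal r \<longrightarrow> radial_density k (K \<xi>) r = 0))"
proof (rule bchoice, rule ballI)
  fix \<xi> :: 'a assume "\<xi> \<in> unit_sphere"
  then have "sets (K \<xi>) = sets borel" "prob_space (K \<xi>)"
    using measurable_space[OF K, of \<xi>] by (simp_all add: space_prob_algebra)
  then show "\<exists>b. 0 < b \<and> (\<forall>r>0. ereal r < b \<longrightarrow> 0 < radial_density k (K \<xi>) r) \<and>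
      (b < \<infinity> \<longrightarrow> (\<forall>r>0. b \<le> ereal r \<longrightarrow> radial_density k (K \<xi>) r = 0))"
    using null by (rule radial_density_threshold)
qed

lemma polar_decomposition_densityI:
  fixes M lam :: "'a::euclidean_space measure" and ell :: "'a \<Rightarrow> real \<Rightarrow> ennreal"
  assumes sets_lam: "sets lam = sets (restrict_space borel unit_sphere)"
    and meas: "(\<lambda>p. ell (fst p) (snd p)) \<in> borel_measurable (restrict_space borel unit_sphere \<Otimes>\<^sub>M borel)"
    and pos: "\<And>\<xi>. \<xi> \<in> unit_sphere \<Longrightarrow> \<exists>b>0. \<forall>r>0. ereal r < b \<longrightarrow> 0 < ell \<xi> r"
    and eq: "\<And>B. B \<in> sets borel \<Longrightarrow> emeasure M B =
      (\<integral>\<^sup>+\<xi>. \<integral>\<^sup>+r. indicator {0<..} r * ell \<xi> r * indicator B (r *\<^sub>R \<xi>) \<partial>lborel \<partial>lam)"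
  shows "polar_decomposition M lam (\<lambda>\<xi>. density (restrict_space lborel {0<..}) (ell \<xi>))"
proof -
  let ?\<nu> = "\<lambda>\<xi>. density (restrict_space lborel {0<..}) (ell \<xi>)"
  have ell_meas: "ell \<xi> \<in> borel_measurable borel" if "\<xi> \<in> unit_sphere" for \<xi>
    using measurable_compose_Pair1[OF _ meas, of \<xi>] that by simp
  have integral_\<nu>: "(\<integral>\<^sup>+r. g r \<partial>?\<nu> \<xi>) = (\<integral>\<^sup>+r. indicator {0<..} r * ell \<xi> r * g r \<partial>lborel)"
    if "\<xi> \<in> unit_sphere" and [measurable]: "g \<in> borel_measurable borel" for \<xi> g
  proof -
    have [measurable]: "ell \<xi> \<in> borel_measurable borel" using ell_meas[OF that(1)] .
    have "(\<integral>\<^sup>+r. g r \<partial>?\<nu> \<xi>) = (\<integral>\<^sup>+r. ell \<xi> r * g r \<partial>restrict_space lborel {0<..})"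
      by (intro nn_integral_density) (auto intro: measurable_restrict_space1)
    also have "\<dots> = (\<integral>\<^sup>+r. indicator {0<..} r * ell \<xi> r * g r \<partial>lborel)"
      by (subst nn_integral_restrict_space) (auto intro!: nn_integral_cong split: split_indicator)
    finally show ?thesis .
  qed
  show ?thesis
    unfolding polar_decomposition_def
  proof (intro conjI ballI)
    show "sets lam = sets (restrict_space borel unit_sphere)" by (fact sets_lam)
    show "sets (?\<nu> \<xi>) = sets (restrict_space borel {0<..})" for \<xi>
      by (simp add: sets_restrict_space)
  next
    fix E :: "real set" assume E0: "E \<in> sets (restrict_space borel {0<..})"
    then have E [measurable]: "E \<in> sets borel" by (simp add: sets_restrict_space_iff)
    have "(\<lambda>\<xi>. \<integral>\<^sup>+r. indicator {0<..} r * ell \<xi> r * indicator E r \<partial>lborel) \<in> borel_measurable lam"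
      using meas unfolding measurable_cong_sets[OF sets_lam refl]
      by (intro lborel.borel_measurable_nn_integral)
         (simp add: split_beta' measurable_cong_sets[OF sets_pair_measure_cong[OF refl sets_lborel] refl])
    moreover have "emeasure (?\<nu> \<xi>) E = (\<integral>\<^sup>+r. indicator {0<..} r * ell \<xi> r * indicator E r \<partial>lborel)"
      if "\<xi> \<in> space lam" for \<xi>
    proof -
      have "\<xi> \<in> unit_sphere" using that sets_eq_imp_space_eq[OF sets_lam] by simp
      then show ?thesis using E0 by (simp flip: integral_\<nu> add: sets_restrict_space)
    qed
    ultimately show "(\<lambda>\<xi>. emeasure (?\<nu> \<xi>) E) \<in> borel_measurable lam"
      by (subst measurable_cong) auto
  next
    fix \<xi> :: 'a assume \<xi>: "\<xi> \<in> unit_sphere"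
    obtain b where "0 < b" and b: "\<And>r. 0 < r \<Longrightarrow> ereal r < b \<Longrightarrow> 0 < ell \<xi> r"
      using pos[OF \<xi>] by blast
    then obtain r0 where r0: "0 < r0" "ereal r0 < b"
      using ereal_dense2[of 0 b] by (auto simp: zero_ereal_def)
    have pos_r0: "0 < ell \<xi> r" if "0 < r" "r \<le> r0" for r
      using b[OF that(1)] r0(2) that(2) by (meson ereal_less_eq(3) le_less_trans)
    show "0 < emeasure (?\<nu> \<xi>) {0<..}"
      using ell_meas[OF \<xi>] r0(1) pos_r0 by (rule emeasure_density_Ioi_pos)
  next
    fix B :: "'a set" assume [measurable]: "B \<in> sets borel"
    have "emeasure M B = (\<integral>\<^sup>+\<xi>. \<integral>\<^sup>+r. indicator {0<..} r * ell \<xi> r * indicator B (r *\<^sub>R \<xi>) \<partial>lborel \<partial>lam)"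
      by (rule eq) simp
    also have "\<dots> = (\<integral>\<^sup>+\<xi>. \<integral>\<^sup>+r. indicator B (r *\<^sub>R \<xi>) \<partial>?\<nu> \<xi> \<partial>lam)"
      using sets_eq_imp_space_eq[OF sets_lam] by (intro nn_integral_cong) (simp add: integral_\<nu>)
    finally show "emeasure M B = (\<integral>\<^sup>+\<xi>. \<integral>\<^sup>+r. indicator B (r *\<^sub>R \<xi>) \<partial>?\<nu> \<xi> \<partial>lam)" .
  qed
qed

lemma nn_integral_radial_density:
  assumes sets_P: "sets P = sets borel" and "sigma_finite_measure P" and [measurable]: "g \<in> borel_measurable borel"
  shows "(\<integral>\<^sup>+s. \<integral>\<^sup>+r. ennreal (a_kernel k r s / min 1 (s ^ k)) * g r \<partial>lborel \<partial>P)
    = (\<integral>\<^sup>+r. indicator {0<..} r * radial_density k P r * g r \<partial>lborel)"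
proof -
  interpret pair_sigma_finite P lborel
    unfolding pair_sigma_finite_def using assms(2) lborel.sigma_finite_measure_axioms by simp
  have a_meas: "(\<lambda>s. ennreal (a_kernel k r s / min 1 (s ^ k))) \<in> borel_measurable P" for r
    unfolding measurable_cong_sets[OF sets_P refl] a_kernel_eq_arcsine_density by measurable
  have "(\<lambda>(s, r). ennreal (a_kernel k r s / min 1 (s ^ k)) * g r) \<in> borel_measurable (P \<Otimes>\<^sub>M lborel)"
    unfolding measurable_cong_sets[OF sets_pair_measure_cong[OF sets_P refl] refl]
      a_kernel_eq_arcsine_density by measurable
  then have "(\<integral>\<^sup>+s. \<integral>\<^sup>+r. ennreal (a_kernel k r s / min 1 (s ^ k)) * g r \<partial>lborel \<partial>P)
      = (\<integral>\<^sup>+r. \<integral>\<^sup>+s. ennreal (a_kernel k r s / min 1 (s ^ k)) * g r \<partial>P \<partial>lborel)"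
    by (rule Fubini'[symmetric])
  also have "\<dots> = (\<integral>\<^sup>+r. radial_density k P r * g r \<partial>lborel)"
    unfolding radial_density_def using a_meas by (intro nn_integral_cong nn_integral_multc)
  also have "\<dots> = (\<integral>\<^sup>+r. indicator {0<..} r * radial_density k P r * g r \<partial>lborel)"
    by (intro nn_integral_cong) (simp add: radial_density_nonpos split: split_indicator)
  finally show ?thesis .
qed

lemma A_op_polar_representation:
  fixes nu :: "'a::euclidean_space measure"
  assumes nu: "levy_measure_k k nu"
  obtains lam K where "sets lam = sets (restrict_space borel unit_sphere)"
    and "K \<in> restrict_space borel unit_sphere \<rightarrow>\<^sub>M prob_algebra borel"
    and "\<And>\<xi>. emeasure (K \<xi>) {..0} = 0"
    and "\<And>B. B \<in> sets borel \<Longrightarrow> emeasure (A_op k nu) B =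
      (\<integral>\<^sup>+\<xi>. \<integral>\<^sup>+r. indicator {0<..} r * radial_density k (K \<xi>) r * indicator B (r *\<^sub>R \<xi>) \<partial>lborel \<partial>lam)"
proof -
  from nu have sets_nu [measurable_cong]: "sets nu = sets borel"
    and fin: "(\<integral>\<^sup>+ x. ennreal (min 1 (norm x ^ k)) \<partial>nu) < \<infinity>"
    by (auto simp: levy_measure_k_def)
  have "(\<integral>\<^sup>+x. indicator (UNIV - {0}) x * ennreal (min 1 (norm x ^ k)) \<partial>nu)
      \<le> (\<integral>\<^sup>+ x. ennreal (min 1 (norm x ^ k)) \<partial>nu)"
    by (intro nn_integral_mono) (simp split: split_indicator)
  then have fin': "(\<integral>\<^sup>+x. indicator (UNIV - {0}) x * ennreal (min 1 (norm x ^ k)) \<partial>nu) < \<infinity>"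
    using fin by (rule le_less_trans)
  have w_meas: "(\<lambda>s::real. min 1 (s ^ k)) \<in> borel_measurable borel" by measurable
  obtain lam K where sets_lam: "sets lam = sets (restrict_space borel unit_sphere)"
    and K: "K \<in> restrict_space borel unit_sphere \<rightarrow>\<^sub>M prob_algebra borel"
    and K_nonpos: "\<And>\<xi>. emeasure (K \<xi>) {..0} = 0"
    and polar: "\<And>G. G \<in> borel_measurable (restrict_space borel unit_sphere \<Otimes>\<^sub>M borel) \<Longrightarrow>
      (\<integral>\<^sup>+x. indicator (UNIV - {0}) x * ennreal (min 1 (norm x ^ k)) * G (sgn x, norm x) \<partial>nu)
        = (\<integral>\<^sup>+\<xi>. \<integral>\<^sup>+s. G (\<xi>, s) \<partial>K \<xi> \<partial>lam)"
    using polar_disintegration[OF sets_nu w_meas fin'] by blast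
  show ?thesis
  proof (rule that[OF sets_lam K K_nonpos])
    fix B :: "'a set" assume [measurable]: "B \<in> sets borel"
    have [measurable]: "(\<lambda>x. x) \<in> restrict_space borel unit_sphere \<rightarrow>\<^sub>M (borel :: 'a measure)"
      by (rule measurable_restrict_space1) simp
    define G where "G p = (\<integral>\<^sup>+r. ennreal (a_kernel k r (snd p) / min 1 (snd p ^ k)) * indicator B (r *\<^sub>R fst p) \<partial>lborel)"
      for p :: "'a \<times> real"
    have "emeasure (A_op k nu) B = (\<integral>\<^sup>+y. indicator B y \<partial>A_op k nu)"
      by (simp add: A_op_eq_distr[OF sets_nu])
    also have "\<dots> = (\<integral>\<^sup>+x. indicator (UNIV - {0}) x * ennreal (min 1 (norm x ^ k)) * G (sgn x, norm x) \<partial>nu)"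
      by (simp add: nn_integral_A_op_polar_coordinates[OF sets_nu] G_def)
    also have "\<dots> = (\<integral>\<^sup>+\<xi>. \<integral>\<^sup>+s. G (\<xi>, s) \<partial>K \<xi> \<partial>lam)"
      by (rule polar) (unfold G_def a_kernel_eq_arcsine_density, measurable)
    also have "\<dots> = (\<integral>\<^sup>+\<xi>. \<integral>\<^sup>+r. indicator {0<..} r * radial_density k (K \<xi>) r * indicator B (r *\<^sub>R \<xi>) \<partial>lborel \<partial>lam)"
    proof (intro nn_integral_cong)
      fix \<xi> assume "\<xi> \<in> space lam"
      then have "K \<xi> \<in> space (prob_algebra borel)"
        using measurable_space[OF K] sets_eq_imp_space_eq[OF sets_lam] by auto
      then have "sets (K \<xi>) = sets borel" "sigma_finite_measure (K \<xi>)"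
        by (auto simp: space_prob_algebra intro: prob_space_imp_sigma_finite)
      then show "(\<integral>\<^sup>+s. G (\<xi>, s) \<partial>K \<xi>)
          = (\<integral>\<^sup>+r. indicator {0<..} r * radial_density k (K \<xi>) r * indicator B (r *\<^sub>R \<xi>) \<partial>lborel)"
        unfolding G_def fst_conv snd_conv by (rule nn_integral_radial_density) simp
    qed
    finally show "emeasure (A_op k nu) B = (\<integral>\<^sup>+\<xi>. \<integral>\<^sup>+r. indicator {0<..} r * radial_density k (K \<xi>) r
        * indicator B (r *\<^sub>R \<xi>) \<partial>lborel \<partial>lam)" .
  qed
qed

theorem proposition2p11:
  fixes nu :: "'a::euclidean_space measure" and k :: nat
  assumes "k \<in> {1, 2}" and "levy_measure_k k nu"
  shows "levy_measure (A_op k nu) \<and>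
    (\<exists>(lam :: 'a measure) (ell :: 'a \<Rightarrow> real \<Rightarrow> ennreal) (b :: 'a \<Rightarrow> ereal).
      polar_decomposition (A_op k nu) lam (\<lambda>\<xi>. density (restrict_space lborel {0<..}) (ell \<xi>)) \<and>
      (\<lambda>p. ell (fst p) (snd p)) \<in> borel_measurable
          (restrict_space borel unit_sphere \<Otimes>\<^sub>M restrict_space borel {0<..}) \<and>
      (\<forall>\<xi>\<in>unit_sphere. \<forall>r>0. lsc_at_point (ell \<xi>) r) \<and>
      (\<forall>\<xi>\<in>unit_sphere. 0 < b \<xi> \<and>
         (\<forall>r>0. ereal r < b \<xi> \<longrightarrow> ell \<xi> r > 0) \<and>
         (b \<xi> < \<infinity> \<longrightarrow> (\<forall>r>0. ereal r \<ge> b \<xi> \<longrightarrow> ell \<xi> r = 0))))"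
proof -
  obtain lam K where sets_lam: "sets lam = sets (restrict_space borel unit_sphere)"
    and K: "K \<in> restrict_space borel unit_sphere \<rightarrow>\<^sub>M prob_algebra borel"
    and K_nonpos: "\<And>\<xi>. emeasure (K \<xi>) {..0} = 0"
    and A_eq: "\<And>B. B \<in> sets borel \<Longrightarrow> emeasure (A_op k nu) B =
      (\<integral>\<^sup>+\<xi>. \<integral>\<^sup>+r. indicator {0<..} r * radial_density k (K \<xi>) r * indicator B (r *\<^sub>R \<xi>) \<partial>lborel \<partial>lam)"
    using A_op_polar_representation[OF assms(2)] by blast
  note thresholds = radial_density_thresholds[OF K K_nonpos, where k=k]
  have meas: "(\<lambda>p. radial_density k (K (fst p)) (snd p))
      \<in> borel_measurable (restrict_space borel unit_sphere \<Otimes>\<^sub>M borel)"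
    using K by (intro measurable_radial_density measurable_prob_algebraD)
  have polar: "polar_decomposition (A_op k nu) lam
      (\<lambda>\<xi>. density (restrict_space lborel {0<..}) (radial_density k (K \<xi>)))"
    by (rule polar_decomposition_densityI[OF sets_lam meas _ A_eq]) (use thresholds in blast)
  have "(\<lambda>p. radial_density k (K (fst p)) (snd p)) \<in> borel_measurable
      (restrict_space borel unit_sphere \<Otimes>\<^sub>M restrict_space borel {0<..})"
    using measurable_compose[OF measurable_pair_restrict_space2 meas] by simp
  moreover have "\<forall>\<xi>\<in>unit_sphere. \<forall>r>0. lsc_at_point (radial_density k (K \<xi>)) r"
    using measurable_space[OF K] by (auto simp: space_prob_algebra intro: lsc_at_point_radial_density)
  ultimately show ?thesis
  proof (intro conjI exI[of _ lam] exI[of _ "\<lambda>\<xi>. radial_density k (K \<xi>)"])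
  qed (use levy_measure_A_op[OF assms] polar thresholds in blast)+
qed

end
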